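(* Let $G$ be a finite group and suppose there is a $1$-rotational solution under $G$ to $OP(a_\infty, a_1, a_2,\dots,a_N)$, where $a_\infty$ is the length of the cycle through $\infty$ in the $2$-factors. Then: (i) if $a_1,\dots,a_N$ are all even, there exists a solution to $OP(2a_\infty-1,\ {}^2a_1,\ {}^2a_2,\dots,{}^2a_N)$; (ii) for every odd prime $p$, there exists a solution to $OP(p(a_\infty-1)+1,\ {}^pa_1,\ {}^pa_2,\dots,{}^pa_N)$.
   Context: For positive integers $t_1,\dots,t_s\ge 3$ with $v=t_1+\dots+t_s$, a solution to the Oberwolfach problem $OP(t_1,\dots,t_s)$ is a $2$-factorization of the complete graph $K_v$ (a set of spanning $2$-regular subgraphs whose edge sets partition the edges of $K_v$) in which every $2$-factor is isomorphic to the vertex-disjoint union of cycles $C_{t_1}\cup\dots\cup C_{t_s}$. The notation ${}^k t$ in the argument list means $t$ repeated $k$ times. For a finite group $G$, $\overline{G}=G\cup\{\infty\}$, $G$ acts on $\overline{G}$ by right multiplication with $\infty g=\infty$, and a $2$-factorization $\mathcal{F}$ of $K_{\overline{G}}$ is $1$-rotational if $Fg\in\mathcal{F}$ for all $F\in\mathcal{F}$, $g\in G$ (where $Fg$ is obtained by replacing each vertex $v$ by $vg$). A $1$-rotational solution under $G$ to $OP(a_\infty,a_1,\dots,a_N)$ is a $1$-rotational $2$-factorization of $K_{\overline{G}}$ whose $2$-factors are each isomorphic to $C_{a_\infty}\cup C_{a_1}\cup\dots\cup C_{a_N}$. *)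

theory Defs
  imports "HOL-Algebra.Group" "HOL-Computational_Algebra.Primes"
begin

text \<open>Simple graphs are represented by their edge sets; an edge is a 2-element set.\<close>

definition complete_edges :: "'v set \<Rightarrow> 'v set set" where
  "complete_edges V = {e. \<exists>x y. x \<in> V \<and> y \<in> V \<and> x \<noteq> y \<and> e = {x, y}}"

text \<open>The standard graph C_{t_1} \<union> ... \<union> C_{t_s}: vertex (i,j) is the j-th vertex of the
  i-th cycle (i < s, j < t_i).\<close>

definition cycles_verts :: "nat list \<Rightarrow> (nat \<times> nat) set" where
  "cycles_verts ts = {(i, j). i < length ts \<and> j < ts ! i}"

definition cycles_graph :: "nat list \<Rightarrow> (nat \<times> nat) set set" where
  "cycles_graph ts =
     {{(i, j), (i, (j + 1) mod (ts ! i))} | i j. i < length ts \<and> j < ts ! i}"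

definition iso_cycles_via :: "'v set \<Rightarrow> 'v set set \<Rightarrow> nat list \<Rightarrow> ('v \<Rightarrow> nat \<times> nat) \<Rightarrow> bool" where
  "iso_cycles_via V F ts f \<longleftrightarrow>
     F \<subseteq> complete_edges V \<and> bij_betw f V (cycles_verts ts) \<and> (\<lambda>e. f ` e) ` F = cycles_graph ts"

definition iso_cycles :: "'v set \<Rightarrow> 'v set set \<Rightarrow> nat list \<Rightarrow> bool" where
  "iso_cycles V F ts \<longleftrightarrow> (\<exists>f. iso_cycles_via V F ts f)"

definition edge_partition :: "'v set \<Rightarrow> 'v set set set \<Rightarrow> bool" where
  "edge_partition V FF \<longleftrightarrow>
     \<Union> FF = complete_edges V \<and> (\<forall>F1\<in>FF. \<forall>F2\<in>FF. F1 \<noteq> F2 \<longrightarrow> F1 \<inter> F2 = {})"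

definition OP_solution :: "'v set \<Rightarrow> 'v set set set \<Rightarrow> nat list \<Rightarrow> bool" where
  "OP_solution V FF ts \<longleftrightarrow>
     (\<forall>t\<in>set ts. 3 \<le> t) \<and> edge_partition V FF \<and> (\<forall>F\<in>FF. iso_cycles V F ts)"

definition OP_solvable :: "nat list \<Rightarrow> bool" where
  "OP_solvable ts \<longleftrightarrow> (\<exists>FF. OP_solution {..<sum_list ts} FF ts)"

text \<open>The extended group: None plays the role of \<infinity>, Some g the group element g.
  Right action of G on G \<union> {\<infinity>}.\<close>

definition ext_carrier :: "('a, 'b) monoid_scheme \<Rightarrow> 'a option set" where
  "ext_carrier G = {None} \<union> Some ` carrier G"

fun ext_act :: "('a, 'b) monoid_scheme \<Rightarrow> 'a option \<Rightarrow> 'a \<Rightarrow> 'a option" where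
  "ext_act G None g = None"
| "ext_act G (Some x) g = Some (x \<otimes>\<^bsub>G\<^esub> g)"

definition translate_factor :: "('a, 'b) monoid_scheme \<Rightarrow> 'a option set set \<Rightarrow> 'a \<Rightarrow> 'a option set set" where
  "translate_factor G F g = (\<lambda>e. (\<lambda>v. ext_act G v g) ` e) ` F"

text \<open>A 1-rotational solution under G to OP(a_inf, a_1, ..., a_N), where a_inf is the
  length of the cycle through \<infinity> (the isomorphism sends \<infinity> into the first cycle).\<close>

definition one_rotational_solution ::
  "('a, 'b) monoid_scheme \<Rightarrow> 'a option set set set \<Rightarrow> nat \<Rightarrow> nat list \<Rightarrow> bool" where
  "one_rotational_solution G FF ainf as \<longleftrightarrow>
     (\<forall>t\<in>set (ainf # as). 3 \<le> t) \<and>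
     edge_partition (ext_carrier G) FF \<and>
     (\<forall>F\<in>FF. \<exists>f. iso_cycles_via (ext_carrier G) F (ainf # as) f \<and> fst (f None) = 0) \<and>
     (\<forall>F\<in>FF. \<forall>g\<in>carrier G. translate_factor G F g \<in> FF)"

end

theory Submission
  imports Defs
begin

text \<open>
  Replace every vertex other than \<infinity> by p copies indexed by \<open>\<int>/p\<close> and turn each 2-factor F into
  p new 2-factors, one for every shift s. A cycle of F avoiding \<infinity> is lifted to p cycles: in
  the k-th copy its vertex x gets the label \<open>k + s\<cdot>w(x)\<close>, where the weight w alternates along
  the cycle (with the value 2 at the end of an odd cycle), so that adjacent weights differ by
  \<open>\<plusminus>1\<close> or \<open>\<plusminus>2\<close>; these differences are invertible modulo an odd p, and for p = 2 all such cycles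
  are even and only \<open>\<plusminus>1\<close> occurs. The cycle through \<infinity> becomes one long cycle which leaves \<infinity>,
  runs p times along the path between the two neighbours of \<infinity>, alternately forward and
  backward, and returns; consecutive passes are joined by a vertical edge, and the j-th pass
  is shifted by the j-th term of the ordering \<open>0, 1, -1, 2, -2, \<dots>\<close> of \<open>\<int>/p\<close>.

  A lifted edge determines its projection, hence F, and, by the invertibility of the weight
  differences, also the shift s. So the new 2-factors are pairwise disjoint, and counting
  edges shows that they cover the complete graph on the \<open>1 + p(v - 1)\<close> new vertices.
\<close>

lemma length_concat_replicate: "length (concat (map (replicate p) xs)) = p * length xs"
  by (induction xs) auto

lemma sum_list_concat_replicate: "sum_list (concat (map (replicate p) xs)) = p * sum_list (xs::nat list)"
  by (induction xs) (auto simp: sum_list_replicate algebra_simps)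

lemma nth_concat_replicate: "n < p * length xs \<Longrightarrow> concat (map (replicate p) xs) ! n = xs ! (n div p)"
proof (induction xs arbitrary: n)
  case Nil then show ?case by simp
next
  case (Cons x xs)
  show ?case
  proof (cases "n < p")
    case True then show ?thesis by (simp add: nth_append)
  next
    case False
    have pp: "0 < p" using Cons.prems by (cases "p = 0") auto
    have "n - p < p * length xs" using Cons.prems False by simp
    then have "concat (map (replicate p) xs) ! (n - p) = xs ! ((n - p) div p)" by (rule Cons.IH)
    moreover have "(n - p) div p = n div p - 1"
    proof -
      have "n = (n - p) + p" using False by simp
      then have "n div p = (n - p) div p + 1" using pp by (metis div_add_self2 less_not_refl2)
      then show ?thesis by simp
    qed
    moreover have "n div p \<noteq> 0" using False pp by (simp add: div_eq_0_iff)
    ultimately show ?thesis using False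
      by (simp add: nth_append)
  qed
qed

lemma set_concat_replicate: "0 < p \<Longrightarrow> set (concat (map (replicate p) xs)) = set xs"
  by (induction xs) auto

lemma mod_add_right_cancel_nat: "((a::nat) + c) mod n = (b + c) mod n \<Longrightarrow> a mod n = b mod n"
  by (simp add: nat_mod_eq_iff)

lemma div_mod_mult_add:
  fixes q d :: nat
  assumes "q < d"
  shows "(j * d + q) div d = j" and "(j * d + q) mod d = q"
  using assms by simp_all

lemma mod_2_neq_Suc_mod_2: "(n::nat) mod 2 \<noteq> Suc n mod 2"
  by presburger

lemma eq_if_dvd_diff_mult_coprime:
  fixes p s s' :: nat and c :: int
  assumes d: "int p dvd (int s - int s') * c" and cp: "coprime (int p) c" and s: "s < p" "s' < p"
  shows "s = s'"
proof (rule ccontr)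
  assume ne: "s \<noteq> s'"
  have "int p dvd (int s - int s')" using d cp coprime_dvd_mult_left_iff by blast
  moreover have "int s - int s' \<noteq> 0" using ne by simp
  ultimately have "\<bar>int p\<bar> \<le> \<bar>int s - int s'\<bar>" using dvd_imp_le_int by blast
  then show False using s by linarith
qed

lemma int_dvd_diff_if_mod_eq: "(x::nat) mod p = y mod p \<Longrightarrow> int p dvd int x - int y"
  by (metis mod_eq_dvd_iff of_nat_mod)

lemma coprime_int_small:
  fixes p :: nat and c :: int
  assumes "c = 1 \<or> c = -1 \<or> ((c = 2 \<or> c = -2) \<and> odd p)"
  shows "coprime (int p) c"
  using assms by (auto simp: coprime_right_2_iff_odd)

section \<open>Graphs made of disjoint cycles\<close>

lemma complete_edges_eq: "complete_edges V = {B. B \<subseteq> V \<and> card B = 2}"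
  unfolding complete_edges_def by (auto simp: card_2_iff)

lemma card_complete_edges: "finite V \<Longrightarrow> card (complete_edges V) = card V * (card V - 1) div 2"
  unfolding complete_edges_eq by (simp add: n_subsets choose_two)

lemma finite_complete_edges: "finite V \<Longrightarrow> finite (complete_edges V)"
  unfolding complete_edges_eq by simp

lemma mem_cycles_verts: "(i,j) \<in> cycles_verts ts \<longleftrightarrow> i < length ts \<and> j < ts!i"
  by (simp add: cycles_verts_def)

lemma cycles_verts_Sigma: "cycles_verts ts = (SIGMA i:{..<length ts}. {..<ts!i})"
  unfolding cycles_verts_def by auto

lemma card_cycles_verts: "card (cycles_verts ts) = sum_list ts"
  by (simp add: cycles_verts_Sigma card_SigmaI sum_list_sum_nth atLeast0LessThan)

lemma finite_cycles_verts: "finite (cycles_verts ts)"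
  by (simp add: cycles_verts_Sigma)

definition cycle_edges :: "nat list \<Rightarrow> (nat \<Rightarrow> nat \<Rightarrow> 'w) \<Rightarrow> 'w set set" where
  "cycle_edges ts c = {{c i j, c i ((j+1) mod ts!i)} | i j. i < length ts \<and> j < ts!i}"

lemma cycle_edges_eq_image: "cycle_edges ts c = (\<lambda>(i,j). {c i j, c i ((j+1) mod ts!i)}) ` cycles_verts ts"
  unfolding cycle_edges_def cycles_verts_def by auto

lemma cycles_graph_eq_cycle_edges: "cycles_graph ts = cycle_edges ts Pair"
  unfolding cycles_graph_def cycle_edges_def by auto

lemma succ_mod_neq:
  fixes t j j' :: nat
  assumes "3 \<le> t" "j < t" "(j+1) mod t = j' " 
  shows "j' \<noteq> j" and "(j'+1) mod t \<noteq> j"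
proof -
  show "j' \<noteq> j"
  proof (cases "j+1 < t")
    case False
    then have "j+1 = t" using assms by simp
    then show ?thesis using assms by auto
  qed (use assms in auto)
  show "(j'+1) mod t \<noteq> j"
  proof (cases "j + 1 < t")
    case True
    then have "j' = j+1" using assms by simp
    show ?thesis
    proof (cases "j+2 < t")
      case False
      then have "j+2 = t" using \<open>j' = j+1\<close> assms True by simp
      then show ?thesis using assms \<open>j' = j+1\<close> by auto
    qed (use assms \<open>j' = j+1\<close> in auto)
  next
    case False
    then have "j+1 = t" using assms by simp
    then have "j' = 0" using assms by simp
    then show ?thesis using assms False by auto
  qed
qed

lemma card_cycle_edges:
  assumes inj: "inj_on (\<lambda>(i,j). c i j) (cycles_verts ts)"
    and ts_ge_3: "\<forall>t\<in>set ts. 3 \<le> t"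
  shows "card (cycle_edges ts c) = sum_list ts"
proof -
  have "inj_on (\<lambda>(i,j). {c i j, c i ((j+1) mod ts!i)}) (cycles_verts ts)"
  proof (rule inj_onI, clarify)
    fix i j i' j'
    assume A: "(i,j) \<in> cycles_verts ts" "(i',j') \<in> cycles_verts ts"
      and E: "{c i j, c i ((j+1) mod ts!i)} = {c i' j', c i' ((j'+1) mod ts!i')}"
    have t3: "3 \<le> ts!i" "3 \<le> ts!i'" using A ts_ge_3 by (auto simp: cycles_verts_def)
    have B: "(i, (j+1) mod ts!i) \<in> cycles_verts ts" "(i', (j'+1) mod ts!i') \<in> cycles_verts ts"
      using A t3 by (auto simp: cycles_verts_def)
    have injc: "\<And>a b a' b'. (a,b) \<in> cycles_verts ts \<Longrightarrow> (a',b') \<in> cycles_verts ts \<Longrightarrow> c a b = c a' b' \<Longrightarrow> a = a' \<and> b = b'"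
      using inj unfolding inj_on_def by fastforce
    show "i = i' \<and> j = j'"
    proof (cases "c i j = c i' j'")
      case True then show ?thesis using injc A by blast
    next
      case False
      then have 1: "c i j = c i' ((j'+1) mod ts!i')" and 2: "c i ((j+1) mod ts!i) = c i' j'"
        using E by (auto simp: doubleton_eq_iff)
      from injc[OF A(1) B(2) 1] have ii: "i = i'" and jj: "j = (j'+1) mod ts!i'" by auto
      from injc[OF B(1) A(2) 2] have jj': "(j+1) mod ts!i = j'" by auto
      have "(j'+1) mod ts!i \<noteq> j" using succ_mod_neq(2)[OF t3(1) _ jj'] A by (auto simp: cycles_verts_def)
      then show ?thesis using jj ii by simp
    qed
  qed
  then show ?thesis by (simp add: cycle_edges_eq_image card_image card_cycles_verts)
qed

lemma card_cycles_graph: "\<forall>t\<in>set ts. 3 \<le> t \<Longrightarrow> card (cycles_graph ts) = sum_list ts"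
  unfolding cycles_graph_eq_cycle_edges by (rule card_cycle_edges) (auto simp: inj_on_def)

lemma iso_cycles_cycle_edges:
  assumes inj: "inj_on (\<lambda>(i,j). c i j) (cycles_verts ts)"
    and img: "(\<lambda>(i,j). c i j) ` cycles_verts ts = V"
    and ts_ge_3: "\<forall>t\<in>set ts. 3 \<le> t"
  shows "iso_cycles V (cycle_edges ts c) ts"
proof -
  let ?C = "\<lambda>(i,j). c i j"
  define f where "f = the_inv_into (cycles_verts ts) ?C"
  have bij: "bij_betw f V (cycles_verts ts)"
  proof -
    have "bij_betw ?C (cycles_verts ts) V" using inj img by (simp add: bij_betw_def)
    then show ?thesis unfolding f_def by (rule bij_betw_the_inv_into)
  qed
  have finv: "\<And>i j. (i,j) \<in> cycles_verts ts \<Longrightarrow> f (c i j) = (i,j)"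
    unfolding f_def using the_inv_into_f_f[OF inj] by fastforce
  have sub: "cycle_edges ts c \<subseteq> complete_edges V"
  proof
    fix e assume "e \<in> cycle_edges ts c"
    then obtain i j where ij: "i < length ts" "j < ts!i" and e: "e = {c i j, c i ((j+1) mod ts!i)}"
      unfolding cycle_edges_def by auto
    have t3: "3 \<le> ts!i" using ij ts_ge_3 by auto
    have A: "(i,j) \<in> cycles_verts ts" "(i,(j+1) mod ts!i) \<in> cycles_verts ts"
      using ij t3 by (auto simp: cycles_verts_def)
    have "(j+1) mod ts!i \<noteq> j" using succ_mod_neq(1)[OF t3 ij(2)] by simp
    then have "c i j \<noteq> c i ((j+1) mod ts!i)" using inj A unfolding inj_on_def by fastforce
    moreover have "c i j \<in> V" "c i ((j+1) mod ts!i) \<in> V" using A img by force+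
    ultimately show "e \<in> complete_edges V" unfolding e complete_edges_def by blast
  qed
  have "(\<lambda>e. f ` e) ` cycle_edges ts c = cycles_graph ts"
  proof -
    have "(\<lambda>e. f ` e) ` cycle_edges ts c = (\<lambda>(i,j). {(i,j), (i, (j+1) mod ts!i)}) ` cycles_verts ts"
      unfolding cycle_edges_eq_image image_image
    proof (rule image_cong[OF refl], clarify)
      fix i j assume x: "(i,j) \<in> cycles_verts ts"
      have t3: "3 \<le> ts!i" using x ts_ge_3 by (auto simp: cycles_verts_def)
      have "(i,(j+1) mod ts!i) \<in> cycles_verts ts" using x t3 by (auto simp: cycles_verts_def)
      then show "f ` {c i j, c i ((j + 1) mod ts ! i)} = {(i, j), (i, (j + 1) mod ts ! i)}"
        using finv x by simp
    qed
    also have "\<dots> = cycles_graph ts" unfolding cycles_graph_eq_cycle_edges cycle_edges_eq_image by simp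
    finally show ?thesis .
  qed
  then show ?thesis unfolding iso_cycles_def iso_cycles_via_def using bij sub by blast
qed

lemma finite_cycle_edges: "finite (cycle_edges ts c)"
  unfolding cycle_edges_eq_image by (simp add: finite_cycles_verts)

lemma complete_edges_image:
  assumes "inj_on h V"
  shows "(\<lambda>e. h ` e) ` complete_edges V = complete_edges (h ` V)"
  using assms unfolding complete_edges_def inj_on_def by (auto simp: image_iff) blast+

lemma complete_edges_subset_Pow: "complete_edges V \<subseteq> Pow V"
  unfolding complete_edges_def by auto

lemma edge_partition_image:
  assumes ep: "edge_partition V FF" and inj: "inj_on h V"
  shows "edge_partition (h ` V) ((\<lambda>F. (\<lambda>e. h ` e) ` F) ` FF)"
  unfolding edge_partition_def
proof (intro conjI ballI impI)
  have un: "\<Union>FF = complete_edges V" using ep unfolding edge_partition_def by blast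
  have "\<Union> ((\<lambda>F. (\<lambda>e. h ` e) ` F) ` FF) = (\<lambda>e. h ` e) ` \<Union>FF" by (simp add: image_Union)
  then show "\<Union> ((\<lambda>F. (\<lambda>e. h ` e) ` F) ` FF) = complete_edges (h ` V)"
    using complete_edges_image[OF inj] un by simp
  fix F1 F2 assume F1: "F1 \<in> (\<lambda>F. (\<lambda>e. h ` e) ` F) ` FF" and F2: "F2 \<in> (\<lambda>F. (\<lambda>e. h ` e) ` F) ` FF"
    and ne: "F1 \<noteq> F2"
  obtain G1 G2 where G: "G1 \<in> FF" "F1 = (\<lambda>e. h ` e) ` G1" "G2 \<in> FF" "F2 = (\<lambda>e. h ` e) ` G2"
    using F1 F2 by auto
  have "G1 \<noteq> G2" using ne G by auto
  then have "G1 \<inter> G2 = {}" using ep G unfolding edge_partition_def by blast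
  moreover have "inj_on (\<lambda>e. h ` e) (\<Union>FF)"
    using inj_on_image_Pow[OF inj] un complete_edges_subset_Pow inj_on_subset by metis
  ultimately show "F1 \<inter> F2 = {}" using G unfolding inj_on_def by blast
qed

lemma iso_cycles_image:
  assumes iso: "iso_cycles V F ts" and h: "bij_betw h V W"
  shows "iso_cycles W ((\<lambda>e. h ` e) ` F) ts"
proof -
  obtain f where f: "F \<subseteq> complete_edges V" "bij_betw f V (cycles_verts ts)"
      "(\<lambda>e. f ` e) ` F = cycles_graph ts"
    using iso unfolding iso_cycles_def iso_cycles_via_def by blast
  have inj: "inj_on h V" and hV: "h ` V = W" using h by (auto simp: bij_betw_def)
  define g where "g = inv_into V h"
  have "bij_betw g W V" unfolding g_def using h by (rule bij_betw_inv_into)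
  then have "bij_betw (f \<circ> g) W (cycles_verts ts)" using f(2) by (rule bij_betw_trans)
  moreover have "(\<lambda>e. h ` e) ` F \<subseteq> complete_edges W"
    using f(1) complete_edges_image[OF inj] hV by auto
  moreover have "(\<lambda>e. (f \<circ> g) ` e) ` ((\<lambda>e. h ` e) ` F) = cycles_graph ts"
  proof -
    have "(f \<circ> g) ` (h ` e) = f ` e" if "e \<in> F" for e
    proof -
      have "e \<subseteq> V" using f(1) complete_edges_subset_Pow that by blast
      then have "g ` h ` e = e" unfolding g_def by (rule inv_into_image_cancel[OF inj])
      then show ?thesis by (metis image_comp)
    qed
    then have "(\<lambda>e. (f \<circ> g) ` e) ` ((\<lambda>e. h ` e) ` F) = (\<lambda>e. f ` e) ` F"
      unfolding image_image by (rule image_cong[OF refl])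
    then show ?thesis using f(3) by simp
  qed
  ultimately show ?thesis unfolding iso_cycles_def iso_cycles_via_def by blast
qed

lemma OP_solution_image:
  assumes sol: "OP_solution V FF ts" and h: "bij_betw h V W"
  shows "OP_solution W ((\<lambda>F. (\<lambda>e. h ` e) ` F) ` FF) ts"
  using sol edge_partition_image[of V FF h] iso_cycles_image[OF _ h] h
  unfolding OP_solution_def bij_betw_def by blast

lemma OP_solvable_if_solution:
  assumes "OP_solution V FF ts" "finite V" "card V = sum_list ts"
  shows "OP_solvable ts"
proof -
  obtain h where "bij_betw h V {..<sum_list ts}"
    using assms by (metis bij_betw_iff_card card_lessThan finite_lessThan)
  then show ?thesis unfolding OP_solvable_def using OP_solution_image assms(1) by blast
qed

lemma iso_cycles_via_comp_automorphism:
  assumes iso: "iso_cycles_via V F ts f"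
    and \<sigma>: "bij_betw \<sigma> (cycles_verts ts) (cycles_verts ts)" "(\<lambda>e. \<sigma> ` e) ` cycles_graph ts = cycles_graph ts"
  shows "iso_cycles_via V F ts (\<sigma> \<circ> f)"
proof -
  have "(\<lambda>e. (\<sigma> \<circ> f) ` e) ` F = (\<lambda>e. \<sigma> ` e) ` ((\<lambda>e. f ` e) ` F)"
    by (simp add: image_image image_comp)
  then show ?thesis using iso \<sigma> bij_betw_trans unfolding iso_cycles_via_def by metis
qed

definition rotate_first_cycle :: "nat list \<Rightarrow> nat \<Rightarrow> nat \<times> nat \<Rightarrow> nat \<times> nat" where
  "rotate_first_cycle ts r = (\<lambda>(i,j). if i = 0 then (0, (j + (ts!0 - r)) mod ts!0) else (i,j))"

lemma bij_rotate_first_cycle: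
  assumes "r < ts!0"
  shows "bij_betw (rotate_first_cycle ts r) (cycles_verts ts) (cycles_verts ts)"
proof -
  let ?\<rho> = "rotate_first_cycle ts r"
  have into: "?\<rho> ` cycles_verts ts \<subseteq> cycles_verts ts"
    unfolding rotate_first_cycle_def mem_cycles_verts using assms
    by (auto simp: mem_cycles_verts split: if_splits)
  have "inj_on ?\<rho> (cycles_verts ts)"
  proof (rule inj_onI, clarify)
    fix i j i' j' assume A: "(i,j) \<in> cycles_verts ts" "(i',j') \<in> cycles_verts ts" "?\<rho> (i,j) = ?\<rho> (i',j')"
    show "i = i' \<and> j = j'"
    proof (cases "i = 0")
      case True
      then have "i' = 0" using A(3) unfolding rotate_first_cycle_def by (auto split: if_splits)
      then have "(j + (ts!0 - r)) mod ts!0 = (j' + (ts!0 - r)) mod ts!0"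
        using A(3) True unfolding rotate_first_cycle_def by auto
      then have "j mod ts!0 = j' mod ts!0" by (rule mod_add_right_cancel_nat)
      then show ?thesis using A True \<open>i' = 0\<close> by (auto simp: mem_cycles_verts)
    next
      case False
      then show ?thesis using A unfolding rotate_first_cycle_def by (auto split: if_splits)
    qed
  qed
  then show ?thesis using endo_inj_surj[OF finite_cycles_verts into] by (simp add: bij_betw_def)
qed

lemma rotate_first_cycle_cycles_graph:
  assumes "r < ts!0"
  shows "(\<lambda>e. rotate_first_cycle ts r ` e) ` cycles_graph ts = cycles_graph ts"
proof -
  let ?\<rho> = "rotate_first_cycle ts r" and ?t = "ts!0"
  have "(\<lambda>e. ?\<rho> ` e) ` cycles_graph ts \<subseteq> cycles_graph ts"
  proof
    fix e' assume "e' \<in> (\<lambda>e. ?\<rho> ` e) ` cycles_graph ts"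
    then obtain i j where ij: "i < length ts" "j < ts!i" and e': "e' = ?\<rho> ` {(i,j), (i, (j+1) mod ts!i)}"
      unfolding cycles_graph_def by auto
    show "e' \<in> cycles_graph ts"
    proof (cases "i = 0")
      case True
      let ?j = "(j + (?t - r)) mod ?t"
      have "((j+1) mod ?t + (?t - r)) mod ?t = (?j + 1) mod ?t"
        by (simp add: mod_simps ac_simps)
      then have "e' = {(0, ?j), (0, (?j+1) mod ts!0)}" unfolding e' rotate_first_cycle_def using True by simp
      moreover have "?j < ts!0" using assms by simp
      ultimately show ?thesis unfolding cycles_graph_def using True ij by blast
    qed (use ij in \<open>auto simp: e' rotate_first_cycle_def cycles_graph_def\<close>)
  qed
  moreover have "inj_on (\<lambda>e. ?\<rho> ` e) (cycles_graph ts)"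
  proof -
    have "cycles_graph ts \<subseteq> Pow (cycles_verts ts)"
      unfolding cycles_graph_def cycles_verts_def by auto
    then show ?thesis using inj_on_image_Pow bij_rotate_first_cycle[OF assms] inj_on_subset
      unfolding bij_betw_def by blast
  qed
  moreover have "finite (cycles_graph ts)" unfolding cycles_graph_eq_cycle_edges by (rule finite_cycle_edges)
  ultimately show ?thesis by (simp add: card_subset_eq card_image)
qed

lemma iso_cycles_via_rotate:
  assumes iso: "iso_cycles_via V F ts f" and v: "v \<in> V" and fv: "f v = (0, r)"
  shows "\<exists>g. iso_cycles_via V F ts g \<and> g v = (0,0)"
proof -
  have "f v \<in> cycles_verts ts" using iso v unfolding iso_cycles_via_def bij_betw_def by blast
  then have r: "r < ts!0" using fv by (simp add: mem_cycles_verts)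
  have "iso_cycles_via V F ts (rotate_first_cycle ts r \<circ> f)"
    using iso_cycles_via_comp_automorphism[OF iso bij_rotate_first_cycle[OF r]
        rotate_first_cycle_cycles_graph[OF r]] .
  moreover have "(rotate_first_cycle ts r \<circ> f) v = (0,0)"
    unfolding rotate_first_cycle_def using fv r by simp
  ultimately show ?thesis by blast
qed

section \<open>The lifted 2-factors\<close>

text \<open>Residues modulo p are the naturals below p. The lifted vertex set is V' below, with
  \<open>(infty, 0)\<close> as its \<infinity>.\<close>

locale cycle_lift =
  fixes V :: "'v set" and infty :: 'v and FF :: "'v set set set" and ts :: "nat list" and p :: nat
    and iso :: "'v set set \<Rightarrow> 'v \<Rightarrow> nat \<times> nat"
  assumes finite_V: "finite V" and infty_in_V: "infty \<in> V" and partition: "edge_partition V FF"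
    and iso_factor: "\<And>F. F \<in> FF \<Longrightarrow> iso_cycles_via V F ts (iso F)"
    and iso_infty: "\<And>F. F \<in> FF \<Longrightarrow> iso F infty = (0,0)"
    and ts_ne: "ts \<noteq> []" and ts_ge_3: "\<forall>t\<in>set ts. 3 \<le> t"
    and p_cases: "(odd p \<and> 3 \<le> p) \<or> (p = 2 \<and> (\<forall>t\<in>set (tl ts). even t))"
begin

abbreviation "ainf \<equiv> ts!0"

lemma p_ge_2: "2 \<le> p" using p_cases by auto
lemma ainf_ge_3: "3 \<le> ainf" using ts_ge_3 ts_ne by auto
lemma ts_nth_ge_3: "i < length ts \<Longrightarrow> 3 \<le> ts!i" using ts_ge_3 by auto

definition vert :: "'v set set \<Rightarrow> nat \<Rightarrow> nat \<Rightarrow> 'v" where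
  "vert F i j = inv_into V (iso F) (i,j)"

lemma bij_iso: "F \<in> FF \<Longrightarrow> bij_betw (iso F) V (cycles_verts ts)"
  using iso_factor unfolding iso_cycles_via_def by auto

lemma vert_in: "F \<in> FF \<Longrightarrow> (i,j) \<in> cycles_verts ts \<Longrightarrow> vert F i j \<in> V"
  unfolding vert_def using bij_iso by (metis bij_betw_def inv_into_into)

lemma iso_vert: "F \<in> FF \<Longrightarrow> (i,j) \<in> cycles_verts ts \<Longrightarrow> iso F (vert F i j) = (i,j)"
  unfolding vert_def using bij_iso by (metis bij_betw_def f_inv_into_f)

lemma vert_iso: "F \<in> FF \<Longrightarrow> x \<in> V \<Longrightarrow> vert F (fst (iso F x)) (snd (iso F x)) = x"
  unfolding vert_def using bij_iso by (simp add: bij_betw_def)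

lemma vert_inj: "F \<in> FF \<Longrightarrow> (i,j) \<in> cycles_verts ts \<Longrightarrow> (i',j') \<in> cycles_verts ts \<Longrightarrow>
    vert F i j = vert F i' j' \<Longrightarrow> i = i' \<and> j = j'"
  by (metis iso_vert prod.inject)

lemma vert_origin: "F \<in> FF \<Longrightarrow> vert F 0 0 = infty"
  using vert_iso[of F infty] iso_infty infty_in_V by simp

lemma origin_in_cycles_verts: "(0,0) \<in> cycles_verts ts" using ts_ne ainf_ge_3 by (simp add: mem_cycles_verts)

lemma vert_neq_infty: "F \<in> FF \<Longrightarrow> (i,j) \<in> cycles_verts ts \<Longrightarrow> (i,j) \<noteq> (0,0) \<Longrightarrow> vert F i j \<noteq> infty"
  using vert_inj[of F i j 0 0] origin_in_cycles_verts vert_origin by auto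

lemma vert_edge:
  assumes F: "F \<in> FF" and ij: "(i,j) \<in> cycles_verts ts"
  shows "{vert F i j, vert F i ((j+1) mod ts!i)} \<in> F"
proof -
  have "{(i,j), (i, (j+1) mod ts!i)} \<in> cycles_graph ts"
    using ij unfolding cycles_graph_def mem_cycles_verts by blast
  moreover have gi: "(\<lambda>e. iso F ` e) ` F = cycles_graph ts"
    using iso_factor[OF F] unfolding iso_cycles_via_def by blast
  ultimately have "{(i,j), (i, (j+1) mod ts!i)} \<in> (\<lambda>e. iso F ` e) ` F" by simp
  then obtain e where e: "e \<in> F" "iso F ` e = {(i,j), (i, (j+1) mod ts!i)}"
    by (metis (no_types, lifting) imageE)
  have "F \<subseteq> complete_edges V" using iso_factor[OF F] unfolding iso_cycles_via_def by simp
  then have "e \<in> Pow V" using e(1) complete_edges_subset_Pow by (meson subsetD)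
  then have eV: "e \<subseteq> V" by simp
  have ij2: "(i, (j+1) mod ts!i) \<in> cycles_verts ts" using ij ts_nth_ge_3 by (auto simp: mem_cycles_verts)
  have "e = {vert F i j, vert F i ((j+1) mod ts!i)}"
  proof
    show "e \<subseteq> {vert F i j, vert F i ((j+1) mod ts!i)}"
    proof
      fix x assume x: "x \<in> e"
      then have "iso F x \<in> {(i,j), (i, (j+1) mod ts!i)}" using e by blast
      then show "x \<in> {vert F i j, vert F i ((j+1) mod ts!i)}" using vert_iso[OF F, of x] x eV by auto
    qed
    show "{vert F i j, vert F i ((j+1) mod ts!i)} \<subseteq> e"
    proof -
      have "(i,j) \<in> iso F ` e" "(i, (j+1) mod ts!i) \<in> iso F ` e" using e by auto
      then obtain x y where xy: "x \<in> e" "iso F x = (i,j)" "y \<in> e" "iso F y = (i, (j+1) mod ts!i)"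
        by (metis imageE)
      have "vert F i j = x" using vert_iso[OF F, of x] xy eV by auto
      moreover have "vert F i ((j+1) mod ts!i) = y" using vert_iso[OF F, of y] xy eV by auto
      ultimately show ?thesis using xy by simp
    qed
  qed
  then show ?thesis using e by simp
qed

definition weight :: "nat \<Rightarrow> nat \<Rightarrow> nat" where
  "weight i j = (if i = 0 then (j - 1) mod 2 else if odd (ts!i) \<and> j = ts!i - 1 then 2 else j mod 2)"

definition phi :: "'v set set \<Rightarrow> 'v \<Rightarrow> nat" where
  "phi F x = weight (fst (iso F x)) (snd (iso F x))"

lemma phi_vert: "F \<in> FF \<Longrightarrow> (i,j) \<in> cycles_verts ts \<Longrightarrow> phi F (vert F i j) = weight i j"
  unfolding phi_def using iso_vert by simp

lemma weight_le_2: "weight i j \<le> 2" unfolding weight_def by auto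

lemma weight_le_1:
  assumes "p = 2" "0 < i" "i < length ts"
  shows "weight i j \<le> 1"
proof -
  have "ts!i \<in> set (tl ts)" using assms(2,3) nth_mem[of "i - 1" "tl ts"] by (simp add: nth_tl)
  then show ?thesis using p_cases assms unfolding weight_def by auto
qed

lemma weight_adjacent_neq:
  assumes "0 < i" "i < length ts" "j < ts!i"
  shows "weight i j \<noteq> weight i ((j+1) mod ts!i)"
proof -
  have t3: "3 \<le> ts!i" using ts_nth_ge_3 assms by auto
  show ?thesis
  proof (cases "j + 1 < ts!i")
    case True
    have m: "(j+1) mod ts!i = j+1" using True by simp
    have d: "j mod 2 \<noteq> (j+1) mod 2" by presburger
    show ?thesis unfolding m weight_def using assms True d by auto
  next
    case False
    then have e: "j + 1 = ts!i" using assms by simp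
    then have m: "(j+1) mod ts!i = 0" by simp
    have "j mod 2 \<noteq> 0 \<or> odd (ts!i)" using e by presburger
    then show ?thesis unfolding m weight_def using assms e t3 by auto
  qed
qed

text \<open>The j-th term of the ordering \<open>0, 1, p - 1, 2, p - 2, \<dots>\<close> of the residues.\<close>
definition zigzag :: "nat \<Rightarrow> nat" where
  "zigzag j = (if even j then (p - j div 2) mod p else (j+1) div 2)"

lemma zigzag_lt: "j < p \<Longrightarrow> zigzag j < p"
  unfolding zigzag_def using p_ge_2 by auto

lemma zigzag_inj: assumes "j < p" "j' < p" "zigzag j = zigzag j'" shows "j = j'"
proof (cases "p = 2")
  case True
  then have "j \<in> {0,1}" "j' \<in> {0,1}" using assms by auto
  then show ?thesis using assms True unfolding zigzag_def by auto
next
  case False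
  then have op: "odd p" using p_cases by auto
  obtain k where pk: "p = 2*k+1" using op by (rule oddE)
  have A: "zigzag j = (if j = 0 then 0 else if even j then p - j div 2 else (j+1) div 2)" for j
    unfolding zigzag_def using p_ge_2 by auto
  have R: "(j = 0 \<and> zigzag j = 0) \<or> (even j \<and> 0 < j \<and> (p+1) div 2 \<le> zigzag j \<and> zigzag j = p - j div 2)
     \<or> (odd j \<and> 1 \<le> zigzag j \<and> zigzag j \<le> (p-1) div 2 \<and> zigzag j = (j+1) div 2)" if "j < p" for j
  proof -
    consider "j = 0" | "even j" "0 < j" | "odd j" by auto
    then show ?thesis
    proof cases
      case 1 then show ?thesis unfolding A by simp
    next
      case 2
      have "j div 2 \<le> k" using that pk by linarith
      then have "(p+1) div 2 \<le> p - j div 2" unfolding pk by simp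
      then show ?thesis using 2 unfolding A by simp
    next
      case 3
      have "(j+1) div 2 \<le> (2*k+1) div 2" using that pk by (intro div_le_mono) simp
      then have "(j+1) div 2 \<le> (p-1) div 2" unfolding pk by simp
      moreover have "1 \<le> (j+1) div 2" using 3 by (elim oddE) simp
      ultimately show ?thesis using 3 unfolding A by simp
    qed
  qed
  have p1: "(p-1) div 2 < (p+1) div 2" unfolding pk by simp
  have E1: "j = j'" if "p - j div 2 = p - j' div 2" "even j" "even j'"
  proof -
    have "j div 2 = j' div 2" using that assms by linarith
    then show ?thesis using that by (metis even_two_times_div_two)
  qed
  have E2: "j = j'" if "(j+1) div 2 = (j'+1) div 2" "odd j" "odd j'"
  proof -
    have "even (j+1)" "even (j'+1)" using that by auto
    then have "j + 1 = j' + 1" using that(1) by (metis even_two_times_div_two)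
    then show ?thesis by simp
  qed
  have p0: "1 \<le> (p+1) div 2" unfolding pk by simp
  show ?thesis using R[OF assms(1)] R[OF assms(2)] assms(3)
  proof (elim disjE conjE)
  qed (use E1 E2 p0 p1 in \<open>simp_all\<close>)
qed

lemma zigzag_sum_consecutive:
  assumes "odd p" "j + 1 < p"
  shows "(zigzag j + zigzag (j+1)) mod p = (if even j then 1 else 0)"
proof (cases "even j")
  case True
  show ?thesis
  proof (cases "j = 0")
    case True then show ?thesis using assms p_ge_2 unfolding zigzag_def by auto
  next
    case False
    have "zigzag j = p - j div 2" using False True assms p_ge_2 unfolding zigzag_def by auto
    moreover have "zigzag (j+1) = j div 2 + 1" using True unfolding zigzag_def by auto
    moreover have "j div 2 < p" using assms by auto
    ultimately have "zigzag j + zigzag (j+1) = p + 1" by simp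
    then show ?thesis using True assms p_ge_2 by (simp add: mod_Suc)
  qed
next
  case False
  have "zigzag j = (j+1) div 2" using False unfolding zigzag_def by auto
  moreover have "zigzag (j+1) = p - (j+1) div 2" using False assms unfolding zigzag_def by auto
  moreover have "(j+1) div 2 < p" using assms by auto
  ultimately have "zigzag j + zigzag (j+1) = p" by simp
  then show ?thesis using False by simp
qed

text \<open>For p = 2 a lifted cycle through \<infinity> has a single vertical edge; reversing the passes for
  s = 1 puts it at the other neighbour of \<infinity>.\<close>
definition reversed :: "nat \<Rightarrow> bool" where "reversed s \<longleftrightarrow> p = 2 \<and> s = 1"
definition forward :: "nat \<Rightarrow> nat \<Rightarrow> bool" where "forward s j \<longleftrightarrow> (even j \<noteq> reversed s)"
definition path_pos :: "nat \<Rightarrow> nat \<Rightarrow> nat \<Rightarrow> nat" where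
  "path_pos s j q = (if forward s j then q else ainf - 2 - q)"

definition path_vert :: "'v set set \<Rightarrow> nat \<Rightarrow> nat \<Rightarrow> nat \<Rightarrow> 'v \<times> nat" where
  "path_vert F s j q = (vert F 0 (path_pos s j q + 1), (s + zigzag j + s * (path_pos s j q mod 2)) mod p)"

text \<open>Cycle i > 0 of a lifted factor is copy \<open>(i - 1) mod p\<close> of cycle \<open>(i - 1) div p + 1\<close> of F.
  On cycle 0, position m > 0 is vertex \<open>(m - 1) mod (ainf - 1)\<close> of pass \<open>(m - 1) div (ainf - 1)\<close>.\<close>
definition lift :: "'v set set \<Rightarrow> nat \<Rightarrow> nat \<Rightarrow> nat \<Rightarrow> 'v \<times> nat" where
  "lift F s i m = (if i = 0 then (if m = 0 then (infty, 0) else path_vert F s ((m-1) div (ainf-1)) ((m-1) mod (ainf-1)))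
     else (vert F ((i-1) div p + 1) m, ((i-1) mod p + s * weight ((i-1) div p + 1) m) mod p))"

definition ts' :: "nat list" where
  "ts' = (p * (ainf - 1) + 1) # concat (map (replicate p) (tl ts))"

definition lifted_factor :: "'v set set \<Rightarrow> nat \<Rightarrow> ('v \<times> nat) set set" where
  "lifted_factor F s = cycle_edges ts' (lift F s)"

definition V' :: "('v \<times> nat) set" where
  "V' = insert (infty, 0) ((V - {infty}) \<times> {..<p})"

lemma length_ts': "length ts' = 1 + p * (length ts - 1)"
  unfolding ts'_def by (simp add: length_concat_replicate)

lemma ts'_0: "ts'!0 = p * (ainf - 1) + 1" unfolding ts'_def by simp

lemma ts'_nth: assumes "0 < i" "i < length ts'" shows "ts'!i = ts!((i-1) div p + 1)"
proof -
  have "i - 1 < p * length (tl ts)" using assms length_ts' by simp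
  then have "ts'!i = tl ts ! ((i-1) div p)"
    unfolding ts'_def using assms by (simp add: nth_concat_replicate nth_Cons')
  then show ?thesis using ts_ne by (cases ts) auto
qed

lemma base_index_lt: assumes "0 < i" "i < length ts'" shows "(i-1) div p + 1 < length ts"
proof -
  have "i - 1 < p * (length ts - 1)" using assms length_ts' by simp
  then have "(i-1) div p < length ts - 1" using p_ge_2 by (simp add: div_less_iff_less_mult mult.commute)
  then show ?thesis by simp
qed

lemma ts'_ge_3: "\<forall>t\<in>set ts'. 3 \<le> t"
proof -
  have "3 \<le> p * (ainf - 1) + 1"
  proof -
    have "2 * 2 \<le> p * (ainf - 1)" using p_ge_2 ainf_ge_3 by (intro mult_mono) auto
    then show ?thesis by simp
  qed
  moreover have "\<forall>t\<in>set (concat (map (replicate p) (tl ts))). 3 \<le> t"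
    using set_concat_replicate[of p "tl ts"] p_ge_2 ts_ge_3 ts_ne by (cases ts) auto
  ultimately show ?thesis unfolding ts'_def by simp
qed

lemma sum_list_ts: "sum_list ts = ainf + sum_list (tl ts)"
  using ts_ne by (cases ts) auto

lemma card_V_eq_sum: assumes "F \<in> FF" shows "card V = sum_list ts"
  using bij_betw_same_card[OF bij_iso[OF assms]] card_cycles_verts by simp

lemma card_V': "card V' = 1 + p * (card V - 1)"
proof -
  have "(infty,0) \<notin> (V - {infty}) \<times> {..<p}" by auto
  moreover have "finite ((V - {infty}) \<times> {..<p})" using finite_V by simp
  ultimately show ?thesis unfolding V'_def using infty_in_V finite_V by (simp add: card_cartesian_product)
qed

lemma finite_V': "finite V'" unfolding V'_def using finite_V by simp

lemma sum_list_ts': "sum_list ts' = p * (ainf - 1) + 1 + p * sum_list (tl ts)"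
  unfolding ts'_def by (simp add: sum_list_concat_replicate)

lemma card_V'_eq_sum: assumes "F \<in> FF" shows "card V' = sum_list ts'"
proof -
  have "card V - 1 = (ainf - 1) + sum_list (tl ts)" using card_V_eq_sum[OF assms] sum_list_ts ainf_ge_3 by simp
  then show ?thesis unfolding card_V' sum_list_ts' by (simp add: algebra_simps)
qed

definition base_pos :: "nat \<Rightarrow> nat \<Rightarrow> nat \<Rightarrow> nat \<times> nat" where
  "base_pos s i m = (if i = 0 then (if m = 0 then (0,0) else (0, path_pos s ((m-1) div (ainf-1)) ((m-1) mod (ainf-1)) + 1))
     else ((i-1) div p + 1, m))"

lemma path_index_bounds:
  assumes "0 < m" "m < p * (ainf - 1) + 1"
  shows "(m-1) div (ainf-1) < p" "(m-1) mod (ainf-1) \<le> ainf - 2"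
proof -
  have a1: "0 < ainf - 1" using ainf_ge_3 by simp
  have "m - 1 < p * (ainf-1)" using assms by simp
  then show "(m-1) div (ainf-1) < p" using a1 by (simp add: div_less_iff_less_mult)
  have "(m-1) mod (ainf-1) < ainf - 1" using a1 by simp
  then show "(m-1) mod (ainf-1) \<le> ainf - 2" by simp
qed

lemma path_pos_le: "q \<le> ainf - 2 \<Longrightarrow> path_pos s j q \<le> ainf - 2"
  unfolding path_pos_def by auto

lemma base_pos_in_cycles_verts:
  assumes "(i,m) \<in> cycles_verts ts'"
  shows "base_pos s i m \<in> cycles_verts ts"
proof (cases "i = 0")
  case True
  show ?thesis
  proof (cases "m = 0")
    case True then show ?thesis using \<open>i = 0\<close> origin_in_cycles_verts unfolding base_pos_def by simp
  next
    case False
    have "m < p * (ainf-1) + 1" using assms True by (simp add: mem_cycles_verts ts'_0)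
    then have "path_pos s ((m-1) div (ainf-1)) ((m-1) mod (ainf-1)) \<le> ainf - 2"
      using path_index_bounds False path_pos_le by simp
    then show ?thesis using True False ainf_ge_3 ts_ne unfolding base_pos_def by (simp add: mem_cycles_verts)
  next
  qed
next
  case False
  then show ?thesis using assms base_index_lt ts'_nth unfolding base_pos_def by (auto simp: mem_cycles_verts mem_cycles_verts)
qed

lemma base_pos_eq_origin: "base_pos s i m = (0,0) \<longleftrightarrow> i = 0 \<and> m = 0"
  unfolding base_pos_def by auto

lemma fst_base_pos_eq_0: "fst (base_pos s i m) = 0 \<longleftrightarrow> i = 0"
  unfolding base_pos_def by auto

lemma fst_lift: "F \<in> FF \<Longrightarrow> fst (lift F s i m) = vert F (fst (base_pos s i m)) (snd (base_pos s i m))"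
  unfolding lift_def base_pos_def path_vert_def using vert_origin by (auto simp: Let_def)

lemma snd_lift_lt: "\<not> (i = 0 \<and> m = 0) \<Longrightarrow> snd (lift F s i m) < p"
  unfolding lift_def path_vert_def using p_ge_2 by auto

lemma path_vert_inj:
  assumes j: "j < p" "j' < p" and q: "q \<le> ainf - 2" "q' \<le> ainf - 2"
    and P: "path_pos s j q = path_pos s j' q'"
    and l: "snd (path_vert F s j q) = snd (path_vert F s j' q')"
  shows "j = j'" and "q = q'"
proof -
  have "(zigzag j + (s + s * (path_pos s j q mod 2))) mod p = (zigzag j' + (s + s * (path_pos s j q mod 2))) mod p"
    using l P unfolding path_vert_def by (simp add: ac_simps)
  then have "zigzag j mod p = zigzag j' mod p" by (rule mod_add_right_cancel_nat)
  then have "zigzag j = zigzag j'" using zigzag_lt j by simp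
  then show jj: "j = j'" using zigzag_inj j by blast
  then show "q = q'" using P q unfolding path_pos_def by (auto split: if_splits)
qed

lemma inj_lift:
  assumes F: "F \<in> FF" and s: "s < p"
  shows "inj_on (\<lambda>(i,m). lift F s i m) (cycles_verts ts')"
proof (rule inj_onI, clarify)
  fix i m i' m'
  assume A: "(i,m) \<in> cycles_verts ts'" "(i',m') \<in> cycles_verts ts'" and E: "lift F s i m = lift F s i' m'"
  have "vert F (fst (base_pos s i m)) (snd (base_pos s i m)) = vert F (fst (base_pos s i' m')) (snd (base_pos s i' m'))"
    using E fst_lift[OF F] by metis
  then have op: "base_pos s i m = base_pos s i' m'"
    using vert_inj[OF F] base_pos_in_cycles_verts[OF A(1), of s] base_pos_in_cycles_verts[OF A(2), of s]
    by (metis prod.collapse)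
  have sn: "snd (lift F s i m) = snd (lift F s i' m')" using E by simp
  show "i = i' \<and> m = m'"
  proof (cases "i = 0")
    case True
    then have i': "i' = 0" using op fst_base_pos_eq_0 by metis
    show ?thesis
    proof (cases "m = 0")
      case True then show ?thesis using op base_pos_eq_origin \<open>i = 0\<close> i' by metis
    next
      case False
      then have m': "m' \<noteq> 0" using op base_pos_eq_origin \<open>i = 0\<close> i' by metis
      define j where "j = (m-1) div (ainf-1)"
      define q where "q = (m-1) mod (ainf-1)"
      define j' where "j' = (m'-1) div (ainf-1)"
      define q' where "q' = (m'-1) mod (ainf-1)"
      have mb: "m < p * (ainf-1) + 1" "m' < p * (ainf-1) + 1" using A True i' by (auto simp: mem_cycles_verts ts'_0)
      have "j < p" "j' < p" "q \<le> ainf - 2" "q' \<le> ainf - 2"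
        using path_index_bounds[OF _ mb(1)] path_index_bounds[OF _ mb(2)] False m'
        unfolding j_def q_def j'_def q'_def by auto
      moreover have "path_pos s j q = path_pos s j' q'"
        using op True i' False m' unfolding base_pos_def j_def q_def j'_def q'_def by simp
      moreover have "snd (path_vert F s j q) = snd (path_vert F s j' q')"
        using sn True i' False m' unfolding lift_def j_def q_def j'_def q'_def by simp
      ultimately have jj: "j = j'" and qq: "q = q'" using path_vert_inj by blast+
      have "m - 1 = j * (ainf-1) + q" "m' - 1 = j' * (ainf-1) + q'"
        unfolding j_def q_def j'_def q'_def by (metis div_mult_mod_eq)+
      then have "m = m'" using jj qq False m' by simp
      then show ?thesis using True i' by simp
    qed
  next
    case False
    then have i': "i' \<noteq> 0" using op fst_base_pos_eq_0 by metis
    have d: "(i-1) div p = (i'-1) div p" and mm: "m = m'"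
      using op False i' unfolding base_pos_def by auto
    have "((i-1) mod p + s * weight ((i-1) div p + 1) m) mod p = ((i'-1) mod p + s * weight ((i-1) div p + 1) m) mod p"
      using sn False i' d mm unfolding lift_def by (simp add: Let_def)
    then have "(i-1) mod p mod p = (i'-1) mod p mod p" by (rule mod_add_right_cancel_nat)
    then have "(i-1) mod p = (i'-1) mod p" by simp
    then have "i - 1 = i' - 1" using d by (metis div_mult_mod_eq)
    then show ?thesis using False i' mm by simp
  qed
qed

lemma lift_image_subset:
  assumes F: "F \<in> FF"
  shows "(\<lambda>(i,m). lift F s i m) ` cycles_verts ts' \<subseteq> V'"
proof -
  have "lift F s i m \<in> V'" if A: "(i,m) \<in> cycles_verts ts'" for i m
  proof (cases "i = 0 \<and> m = 0")
    case True then show ?thesis unfolding lift_def V'_def by simp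
  next
    case False
    have "fst (lift F s i m) \<in> V" using fst_lift[OF F] vert_in[OF F] base_pos_in_cycles_verts[OF A] by (metis prod.collapse)
    moreover have "fst (lift F s i m) \<noteq> infty"
      using fst_lift[OF F] vert_neq_infty[OF F] base_pos_in_cycles_verts[OF A] base_pos_eq_origin False by (metis prod.collapse)
    moreover have "snd (lift F s i m) < p" using snd_lift_lt False by blast
    ultimately show ?thesis unfolding V'_def by (metis DiffI insertCI lessThan_iff mem_Sigma_iff prod.collapse singletonD)
  qed
  then show ?thesis by auto
qed

lemma lift_image:
  assumes F: "F \<in> FF" and s: "s < p"
  shows "(\<lambda>(i,m). lift F s i m) ` cycles_verts ts' = V'"
proof (rule card_subset_eq[OF finite_V' lift_image_subset[OF F]])
  show "card ((\<lambda>(i,m). lift F s i m) ` cycles_verts ts') = card V'"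
    using card_image[OF inj_lift[OF F s]] card_cycles_verts card_V'_eq_sum[OF F] by simp
qed

lemma iso_cycles_lifted_factor: "F \<in> FF \<Longrightarrow> s < p \<Longrightarrow> iso_cycles V' (lifted_factor F s) ts'"
  unfolding lifted_factor_def using iso_cycles_cycle_edges[OF inj_lift lift_image ts'_ge_3] by blast

lemma card_lifted_factor: "F \<in> FF \<Longrightarrow> s < p \<Longrightarrow> card (lifted_factor F s) = card V'"
  unfolding lifted_factor_def using card_cycle_edges[OF inj_lift ts'_ge_3] card_V'_eq_sum by simp

lemma lifted_factor_subset: "F \<in> FF \<Longrightarrow> s < p \<Longrightarrow> lifted_factor F s \<subseteq> complete_edges V'"
  using iso_cycles_lifted_factor unfolding iso_cycles_def iso_cycles_via_def by blast

definition nbr_first :: "'v set set \<Rightarrow> 'v" where "nbr_first F = vert F 0 1"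
definition nbr_last :: "'v set set \<Rightarrow> 'v" where "nbr_last F = vert F 0 (ainf - 1)"

text \<open>The labels on the edges at \<infinity> and on the vertical edges of a lifted factor, as functions of
  the shift s; for each p they determine s.\<close>
definition inf_label :: "'v set set \<Rightarrow> 'v \<Rightarrow> nat \<Rightarrow> nat \<Rightarrow> bool" where
  "inf_label F x l s \<longleftrightarrow> (if p = 2 then s = (if x = nbr_first F then 0 else 1)
     else l mod p = (s * (1 + phi F x) + (if x = nbr_first F then 0 else zigzag (p-1))) mod p)"

definition vertical_labels :: "'v set set \<Rightarrow> 'v \<Rightarrow> nat \<Rightarrow> nat \<Rightarrow> nat \<Rightarrow> bool" where
  "vertical_labels F x l1 l2 s \<longleftrightarrow> (if p = 2 then s = (if x = nbr_first F then 1 else 0)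
     else (l1 + l2) mod p = (2 * s * (1 + phi F x) + (if x = nbr_first F then 0 else 1)) mod p)"

definition cross_edge :: "'v set set \<Rightarrow> nat \<Rightarrow> ('v \<times> nat) set \<Rightarrow> bool" where
  "cross_edge F s e \<longleftrightarrow> (\<exists>x y K. e = {(x, (K + s * phi F x) mod p), (y, (K + s * phi F y) mod p)} \<and>
     {x,y} \<in> F \<and> x \<noteq> infty \<and> y \<noteq> infty \<and> x \<noteq> y \<and> phi F x \<noteq> phi F y)"

definition inf_edge :: "'v set set \<Rightarrow> nat \<Rightarrow> ('v \<times> nat) set \<Rightarrow> bool" where
  "inf_edge F s e \<longleftrightarrow> (\<exists>x l. e = {(infty, 0), (x, l)} \<and> (x = nbr_first F \<or> x = nbr_last F) \<and> inf_label F x l s)"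

definition vertical_edge :: "'v set set \<Rightarrow> nat \<Rightarrow> ('v \<times> nat) set \<Rightarrow> bool" where
  "vertical_edge F s e \<longleftrightarrow> (\<exists>x l1 l2. e = {(x, l1), (x, l2)} \<and> l1 \<noteq> l2 \<and> (x = nbr_first F \<or> x = nbr_last F) \<and> vertical_labels F x l1 l2 s)"

lemma inf_edgeI: "x = nbr_first F \<or> x = nbr_last F \<Longrightarrow> inf_label F x l s \<Longrightarrow> inf_edge F s {(infty,0),(x,l)}"
  unfolding inf_edge_def by (intro exI[of _ x] exI[of _ l]) simp

lemma inf_edgeI': "x = nbr_first F \<or> x = nbr_last F \<Longrightarrow> inf_label F x l s \<Longrightarrow> inf_edge F s {(x,l),(infty,0)}"
  unfolding inf_edge_def by (intro exI[of _ x] exI[of _ l]) (simp add: insert_commute)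

lemma vertical_edgeI: "l1 \<noteq> l2 \<Longrightarrow> x = nbr_first F \<or> x = nbr_last F \<Longrightarrow> vertical_labels F x l1 l2 s \<Longrightarrow> vertical_edge F s {(x,l1),(x,l2)}"
  unfolding vertical_edge_def by (intro exI[of _ x] exI[of _ l1] exI[of _ l2]) simp

lemma Suc_ainf_minus_2: "ainf - 2 + 1 = ainf - 1" "Suc (ainf - 2) = ainf - 1" using ainf_ge_3 by linarith+

lemma first_cycle_in_cycles_verts: "j < ainf \<Longrightarrow> (0,j) \<in> cycles_verts ts" using ts_ne by (simp add: mem_cycles_verts)

lemma nbr_first_neq_last: "F \<in> FF \<Longrightarrow> nbr_first F \<noteq> nbr_last F"
  unfolding nbr_first_def nbr_last_def using vert_inj[of F 0 1 0 "ainf-1"] first_cycle_in_cycles_verts ainf_ge_3 by auto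

lemma phi_nbr_first: "F \<in> FF \<Longrightarrow> phi F (nbr_first F) = 0"
  unfolding nbr_first_def using phi_vert first_cycle_in_cycles_verts ainf_ge_3 by (simp add: weight_def)

lemma phi_nbr_last: "phi F (nbr_last F) = (ainf - 2) mod 2" if "F \<in> FF"
proof -
  have "ainf - 1 < ainf" using ainf_ge_3 by simp
  then have "phi F (nbr_last F) = (ainf - 1 - 1) mod 2" unfolding nbr_last_def using phi_vert first_cycle_in_cycles_verts ainf_ge_3 that by (simp add: weight_def)
  then show ?thesis by (simp add: numeral_2_eq_2)
qed

lemma path_vert_eq:
  assumes F: "F \<in> FF" and q: "q \<le> ainf - 2"
  shows "path_vert F s j q = (vert F 0 (path_pos s j q + 1), ((s + zigzag j) + s * phi F (vert F 0 (path_pos s j q + 1))) mod p)"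
proof -
  have "path_pos s j q + 1 < ainf" using path_pos_le[OF q, of s j] ainf_ge_3 by linarith
  then have "phi F (vert F 0 (path_pos s j q + 1)) = path_pos s j q mod 2" using phi_vert[OF F first_cycle_in_cycles_verts] by (simp add: weight_def)
  then show ?thesis unfolding path_vert_def by simp
qed

lemma lift_first_cycle: "0 < m \<Longrightarrow> lift F s 0 m = path_vert F s ((m-1) div (ainf-1)) ((m-1) mod (ainf-1))"
  unfolding lift_def by simp

lemma vert_first_cycle_neq_infty: "F \<in> FF \<Longrightarrow> P < ainf - 1 \<Longrightarrow> vert F 0 (P + 1) \<noteq> infty"
  using vert_neq_infty first_cycle_in_cycles_verts by simp

lemma lift_edge_later_cycle:
  assumes F: "F \<in> FF" and i: "0 < i" "i < length ts'" and m: "m < ts'!i"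
  shows "cross_edge F s {lift F s i m, lift F s i ((m+1) mod ts'!i)}"
proof -
  define \<iota> where "\<iota> = (i-1) div p + 1"
  define k where "k = (i-1) mod p"
  have il: "\<iota> < length ts" unfolding \<iota>_def using base_index_lt i by simp
  have t: "ts'!i = ts!\<iota>" unfolding \<iota>_def using ts'_nth i by simp
  have t3: "3 \<le> ts!\<iota>" using ts_nth_ge_3 il by simp
  have i0: "\<iota> \<noteq> 0" unfolding \<iota>_def by simp
  let ?m = "(m+1) mod ts!\<iota>"
  have c1: "(\<iota>, m) \<in> cycles_verts ts" "(\<iota>, ?m) \<in> cycles_verts ts" using m t il t3 by (auto simp: mem_cycles_verts)
  have e1: "lift F s i m = (vert F \<iota> m, (k + s * phi F (vert F \<iota> m)) mod p)"
    using i c1 phi_vert[OF F] unfolding lift_def \<iota>_def k_def by simp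
  have e2: "lift F s i ((m+1) mod ts'!i) = (vert F \<iota> ?m, (k + s * phi F (vert F \<iota> ?m)) mod p)"
    using i c1 phi_vert[OF F] t unfolding lift_def \<iota>_def k_def by simp
  have "?m \<noteq> m" using succ_mod_neq(1)[OF t3] m t by simp
  then have ne: "vert F \<iota> m \<noteq> vert F \<iota> ?m" using vert_inj[OF F c1] by auto
  have "weight \<iota> m \<noteq> weight \<iota> ?m" using weight_adjacent_neq i0 il m t by simp
  then have "phi F (vert F \<iota> m) \<noteq> phi F (vert F \<iota> ?m)" using phi_vert[OF F] c1 by simp
  moreover have "{vert F \<iota> m, vert F \<iota> ?m} \<in> F" using vert_edge[OF F c1(1)] .
  moreover have "vert F \<iota> m \<noteq> infty" "vert F \<iota> ?m \<noteq> infty" using vert_neq_infty[OF F] c1 i0 by auto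
  ultimately show ?thesis unfolding cross_edge_def e1 e2 using ne by blast
qed

lemma lift_edge_leaving_infty:
  assumes F: "F \<in> FF" and s: "s < p"
  shows "inf_edge F s {lift F s 0 0, lift F s 0 ((0+1) mod ts'!0)}"
proof -
  have "0 < p * (ainf - 1)" using p_ge_2 ainf_ge_3 by simp
  then have L: "(0+1) mod ts'!0 = 1" unfolding ts'_0 by simp
  have c: "lift F s 0 1 = path_vert F s 0 0" using lift_first_cycle[of 1] by simp
  have z: "path_vert F s 0 0 = (vert F 0 (path_pos s 0 0 + 1), ((s + zigzag 0) + s * phi F (vert F 0 (path_pos s 0 0 + 1))) mod p)"
    using path_vert_eq[OF F] by simp
  have h0: "zigzag 0 = 0" unfolding zigzag_def by simp
  have c00: "lift F s 0 0 = (infty, 0)" unfolding lift_def by simp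
  show ?thesis
  proof (cases "reversed s")
    case True
    then have p2': "p = 2" "s = 1" unfolding reversed_def by auto
    have "path_pos s 0 0 = ainf - 2" unfolding path_pos_def forward_def using True by simp
    then have x: "vert F 0 (path_pos s 0 0 + 1) = nbr_last F" unfolding nbr_last_def using Suc_ainf_minus_2 by simp
    show ?thesis unfolding L c z x c00
    proof (rule inf_edgeI)
      show "inf_label F (nbr_last F) (((s + zigzag 0) + s * phi F (nbr_last F)) mod p) s"
        unfolding inf_label_def using nbr_first_neq_last[OF F] p2' by auto
    qed simp
  next
    case False
    have "path_pos s 0 0 = 0" unfolding path_pos_def forward_def using False by simp
    then have x: "vert F 0 (path_pos s 0 0 + 1) = nbr_first F" unfolding nbr_first_def by simp
    have "\<not> (p = 2 \<and> s = 1)" using False unfolding reversed_def by simp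
    then have "p = 2 \<Longrightarrow> s = 0" using s by auto
    show ?thesis unfolding L c z x c00
    proof (rule inf_edgeI)
      show "inf_label F (nbr_first F) (((s + zigzag 0) + s * phi F (nbr_first F)) mod p) s"
        unfolding inf_label_def using phi_nbr_first[OF F] h0 \<open>p = 2 \<Longrightarrow> s = 0\<close> by auto
    qed simp
  qed
qed

lemma cross_edgeI:
  "{x,y} \<in> F \<Longrightarrow> x \<noteq> infty \<Longrightarrow> y \<noteq> infty \<Longrightarrow> x \<noteq> y \<Longrightarrow> phi F x \<noteq> phi F y \<Longrightarrow>
   cross_edge F s {(x, (K + s * phi F x) mod p), (y, (K + s * phi F y) mod p)}"
  unfolding cross_edge_def by (intro exI[of _ x] exI[of _ y] exI[of _ K]) simp

lemma phi_vert_first_cycle: "F \<in> FF \<Longrightarrow> P < ainf - 1 \<Longrightarrow> phi F (vert F 0 (P + 1)) = P mod 2"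
  using phi_vert first_cycle_in_cycles_verts by (simp add: weight_def)

lemma path_length_pos: "0 < p * (ainf - 1)" using p_ge_2 ainf_ge_3 by simp

lemma lift_edge_entering_infty:
  assumes F: "F \<in> FF" and s: "s < p"
  shows "inf_edge F s {lift F s 0 (p * (ainf - 1)), lift F s 0 ((p * (ainf - 1) + 1) mod ts'!0)}"
proof -
  have c00: "lift F s 0 0 = (infty, 0)" unfolding lift_def by simp
  have L: "(p * (ainf - 1) + 1) mod ts'!0 = 0" unfolding ts'_0 by simp
  have eq: "p * (ainf - 1) - 1 = (p - 1) * (ainf - 1) + (ainf - 2)"
  proof -
    obtain p' where "p = Suc p'" using p_ge_2 by (cases p) auto
    then show ?thesis using ainf_ge_3 by (simp add: algebra_simps)
  qed
  have a1: "ainf - 2 < ainf - 1" using ainf_ge_3 by simp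
  have c: "lift F s 0 (p * (ainf - 1)) = path_vert F s (p - 1) (ainf - 2)"
    unfolding lift_first_cycle[OF path_length_pos] eq div_mod_mult_add[OF a1] ..
  have z: "path_vert F s (p-1) (ainf-2) = (vert F 0 (path_pos s (p-1) (ainf-2) + 1), ((s + zigzag (p-1)) + s * phi F (vert F 0 (path_pos s (p-1) (ainf-2) + 1))) mod p)"
    using path_vert_eq[OF F] by simp
  consider "p = 2" "s = 1" | "p = 2" "s = 0" | "odd p" using p_cases s by (cases "p = 2") (auto, linarith)
  then show ?thesis
  proof cases
    case 1
    then have "path_pos s (p-1) (ainf-2) = ainf - 2" unfolding path_pos_def forward_def reversed_def by simp
    then have x: "vert F 0 (path_pos s (p-1) (ainf-2) + 1) = nbr_last F" unfolding nbr_last_def using Suc_ainf_minus_2 by simp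
    show ?thesis unfolding L c z x c00
    proof (rule inf_edgeI')
      show "inf_label F (nbr_last F) (((s + zigzag (p-1)) + s * phi F (nbr_last F)) mod p) s"
        unfolding inf_label_def using nbr_first_neq_last[OF F] 1 by auto
    qed simp
  next
    case 2
    then have "path_pos s (p-1) (ainf-2) = 0" unfolding path_pos_def forward_def reversed_def by simp
    then have x: "vert F 0 (path_pos s (p-1) (ainf-2) + 1) = nbr_first F" unfolding nbr_first_def by simp
    show ?thesis unfolding L c z x c00
    proof (rule inf_edgeI')
      show "inf_label F (nbr_first F) (((s + zigzag (p-1)) + s * phi F (nbr_first F)) mod p) s"
        unfolding inf_label_def using 2 by auto
    qed simp
  next
    case 3
    then have "\<not> reversed s" "even (p - 1)" unfolding reversed_def by auto
    then have "path_pos s (p-1) (ainf-2) = ainf - 2" unfolding path_pos_def forward_def by simp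
    then have x: "vert F 0 (path_pos s (p-1) (ainf-2) + 1) = nbr_last F" unfolding nbr_last_def using Suc_ainf_minus_2 by simp
    show ?thesis unfolding L c z x c00
    proof (rule inf_edgeI')
      show "inf_label F (nbr_last F) (((s + zigzag (p-1)) + s * phi F (nbr_last F)) mod p) s"
        unfolding inf_label_def using nbr_first_neq_last[OF F] 3 by (auto simp: algebra_simps)
    qed simp
  qed
qed

lemma lift_edge_path:
  assumes F: "F \<in> FF" and s: "s < p" and m: "0 < m" "m + 1 < p * (ainf - 1) + 1"
    and q: "(m-1) mod (ainf-1) < ainf - 2"
  shows "cross_edge F s {lift F s 0 m, lift F s 0 (m + 1)}"
proof -
  define j where "j = (m-1) div (ainf-1)"
  define q where "q = (m-1) mod (ainf-1)"
  have mq: "m = j * (ainf-1) + (q + 1)" unfolding j_def q_def using m by (metis add.assoc div_mult_mod_eq Suc_pred' Suc_eq_plus1)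
  have q1: "q + 1 < ainf - 1" using q unfolding q_def by linarith
  have c1: "lift F s 0 m = path_vert F s j q" using lift_first_cycle[OF m(1)] unfolding j_def q_def .
  have c2: "lift F s 0 (m+1) = path_vert F s j (q+1)"
  proof -
    have "lift F s 0 (m+1) = path_vert F s (m div (ainf-1)) (m mod (ainf-1))" using lift_first_cycle[of "m+1"] by simp
    then show ?thesis using mq div_mod_mult_add[OF q1] by metis
  qed
  have qa: "q \<le> ainf - 2" "q + 1 \<le> ainf - 2" using q1 by linarith+
  define P where "P = path_pos s j q"
  define P' where "P' = path_pos s j (q+1)"
  have PP: "(P' = P + 1 \<and> P + 1 \<le> ainf - 2) \<or> (P = P' + 1 \<and> P' + 1 \<le> ainf - 2)"
    unfolding P_def P'_def path_pos_def using qa by auto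
  have Pb: "P < ainf - 1" "P' < ainf - 1" using PP by linarith+
  let ?x = "vert F 0 (P + 1)" and ?y = "vert F 0 (P' + 1)"
  have z1: "path_vert F s j q = (?x, ((s + zigzag j) + s * phi F ?x) mod p)" using path_vert_eq[OF F qa(1)] unfolding P_def .
  have z2: "path_vert F s j (q+1) = (?y, ((s + zigzag j) + s * phi F ?y) mod p)" using path_vert_eq[OF F qa(2)] unfolding P'_def .
  have cvs: "(0, P+1) \<in> cycles_verts ts" "(0, P'+1) \<in> cycles_verts ts" using Pb first_cycle_in_cycles_verts by auto
  have edge: "{?x, ?y} \<in> F"
  proof (cases "P' = P + 1")
    case True
    have "(P + 1 + 1) mod ainf = P' + 1" using True Pb by simp
    then show ?thesis using vert_edge[OF F cvs(1)] ts_ne True by simp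
  next
    case False
    then have "P = P' + 1" using PP by simp
    moreover have "(P' + 1 + 1) mod ainf = P + 1" using \<open>P = P' + 1\<close> Pb by simp
    ultimately show ?thesis using vert_edge[OF F cvs(2)] by (simp add: insert_commute)
  qed
  have ne: "?x \<noteq> ?y" using vert_inj[OF F cvs] PP by auto
  have ph: "phi F ?x \<noteq> phi F ?y" using phi_vert_first_cycle[OF F Pb(1)] phi_vert_first_cycle[OF F Pb(2)] PP mod_2_neq_Suc_mod_2 by (metis Suc_eq_plus1)
  show ?thesis unfolding c1 c2 z1 z2
    by (rule cross_edgeI[OF edge vert_first_cycle_neq_infty[OF F Pb(1)] vert_first_cycle_neq_infty[OF F Pb(2)] ne ph])
qed

lemma vertical_labels_turn:
  assumes F: "F \<in> FF" and s: "s < p" and jp: "j + 1 < p"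
    and x: "x = (if forward s j then nbr_last F else nbr_first F)"
  shows "vertical_labels F x ((s + zigzag j + s * phi F x) mod p) ((s + zigzag (j+1) + s * phi F x) mod p) s"
proof (cases "p = 2")
  case True
  then have j0: "j = 0" using jp by simp
  have "s = 0 \<or> s = 1" using s True by auto
  then show ?thesis
  proof
    assume s0: "s = 0"
    then have "forward s j" unfolding forward_def reversed_def j0 by simp
    then show ?thesis unfolding vertical_labels_def using x nbr_first_neq_last[OF F] s0 True by auto
  next
    assume s1: "s = 1"
    then have "\<not> forward s j" unfolding forward_def reversed_def j0 using True by simp
    then show ?thesis unfolding vertical_labels_def using x s1 True by auto
  qed
next
  case False
  then have op: "odd p" using p_cases by auto
  have nf: "\<not> reversed s" unfolding reversed_def using False by simp
  have hs: "(zigzag j + zigzag (j+1)) mod p = (if even j then 1 else 0)" using zigzag_sum_consecutive[OF op jp] .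
  have delta: "(if x = nbr_first F then 0 else 1) = (if even j then (1::nat) else 0)"
  proof (cases "even j")
    case True
    then have "forward s j" unfolding forward_def using nf by simp
    then show ?thesis using x nbr_first_neq_last[OF F] True by simp
  next
    case False
    then have "\<not> forward s j" unfolding forward_def using nf by simp
    then show ?thesis using x False by simp
  qed
  have "(((s + zigzag j) + s * phi F x) mod p + ((s + zigzag (j+1)) + s * phi F x) mod p) mod p
      = (2 * s * (1 + phi F x) + (zigzag j + zigzag (j+1))) mod p"
  proof -
    have "((s + zigzag j) + s * phi F x) + ((s + zigzag (j+1)) + s * phi F x) = 2 * s * (1 + phi F x) + (zigzag j + zigzag (j+1))"
      by (simp add: algebra_simps mult_2 mult_2_right)
    then show ?thesis by (simp only: mod_add_eq)
  qed
  also have "\<dots> = (2 * s * (1 + phi F x) + (zigzag j + zigzag (j+1)) mod p) mod p"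
    by (simp add: mod_add_right_eq)
  also have "\<dots> = (2 * s * (1 + phi F x) + (if x = nbr_first F then 0 else 1)) mod p"
    unfolding hs delta ..
  finally show ?thesis unfolding vertical_labels_def using False by simp
qed

lemma lift_edge_turn:
  assumes F: "F \<in> FF" and s: "s < p" and m: "0 < m" "m + 1 < p * (ainf - 1) + 1"
    and q: "(m-1) mod (ainf-1) = ainf - 2"
  shows "vertical_edge F s {lift F s 0 m, lift F s 0 (m + 1)}"
proof -
  define j where "j = (m-1) div (ainf-1)"
  have a1: "0 < ainf - 1" "ainf - 2 < ainf - 1" using ainf_ge_3 by auto
  have mq: "m = (j + 1) * (ainf-1) + 0"
  proof -
    have "m - 1 = j * (ainf-1) + (ainf - 2)" unfolding j_def using q by (metis div_mult_mod_eq)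
    then have "m = j * (ainf-1) + (ainf - 2 + 1)" using m by linarith
    then show ?thesis unfolding Suc_ainf_minus_2(1) by simp
  qed
  have c1: "lift F s 0 m = path_vert F s j (ainf-2)" using lift_first_cycle[OF m(1)] q unfolding j_def by simp
  have c2: "lift F s 0 (m+1) = path_vert F s (j+1) 0"
  proof -
    have "lift F s 0 (m+1) = path_vert F s (m div (ainf-1)) (m mod (ainf-1))" using lift_first_cycle[of "m+1"] by simp
    then show ?thesis using mq div_mod_mult_add[OF a1(1)] by metis
  qed
  have jp: "j + 1 < p"
  proof -
    have "(j+1) * (ainf-1) < p * (ainf-1)" using mq m by simp
    then show ?thesis using mult_less_cancel2 by blast
  qed
  have fwj: "forward s (j+1) = (\<not> forward s j)" unfolding forward_def by simp
  define P where "P = path_pos s j (ainf-2)"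
  have P2: "path_pos s (j+1) 0 = P" unfolding P_def path_pos_def fwj by simp
  have Pv: "P = (if forward s j then ainf - 2 else 0)" unfolding P_def path_pos_def by simp
  have Pb: "P < ainf - 1" using Pv ainf_ge_3 by auto
  let ?x = "vert F 0 (P + 1)"
  have z1: "path_vert F s j (ainf-2) = (?x, ((s + zigzag j) + s * phi F ?x) mod p)" using path_vert_eq[OF F, of "ainf-2"] unfolding P_def by simp
  have z2: "path_vert F s (j+1) 0 = (?x, ((s + zigzag (j+1)) + s * phi F ?x) mod p)" using path_vert_eq[OF F, of 0 s "j+1"] P2 by simp
  have hlt: "zigzag j < p" "zigzag (j+1) < p" using zigzag_lt jp by auto
  have l_ne: "((s + zigzag j) + s * phi F ?x) mod p \<noteq> ((s + zigzag (j+1)) + s * phi F ?x) mod p"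
  proof
    assume "((s + zigzag j) + s * phi F ?x) mod p = ((s + zigzag (j+1)) + s * phi F ?x) mod p"
    then have "(zigzag j + (s + s * phi F ?x)) mod p = (zigzag (j+1) + (s + s * phi F ?x)) mod p" by (simp add: ac_simps)
    then have "zigzag j mod p = zigzag (j+1) mod p" by (rule mod_add_right_cancel_nat)
    then have "zigzag j = zigzag (j+1)" using hlt by simp
    then show False using zigzag_inj[of j "j+1"] jp by simp
  qed
  have xw: "forward s j \<Longrightarrow> ?x = nbr_last F" unfolding Pv nbr_last_def using Suc_ainf_minus_2 by simp
  have xu: "\<not> forward s j \<Longrightarrow> ?x = nbr_first F" unfolding Pv nbr_first_def by simp
  have xuw: "?x = nbr_first F \<or> ?x = nbr_last F" using xw xu by blast
  have "?x = (if forward s j then nbr_last F else nbr_first F)" using xw xu by simp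
  note V = vertical_labels_turn[OF F s jp this]
  show ?thesis unfolding c1 c2 z1 z2 by (rule vertical_edgeI[OF l_ne xuw V])
qed

lemma lifted_edge_cases:
  assumes F: "F \<in> FF" and s: "s < p" and e: "e \<in> lifted_factor F s"
  shows "cross_edge F s e \<or> inf_edge F s e \<or> vertical_edge F s e"
proof -
  obtain i m where im: "i < length ts'" "m < ts'!i" and e: "e = {lift F s i m, lift F s i ((m+1) mod ts'!i)}"
    using e unfolding lifted_factor_def cycle_edges_def by blast
  show ?thesis
  proof (cases "i = 0")
    case False
    then show ?thesis using lift_edge_later_cycle[OF F _ im(1) im(2)] e by simp
  next
    case True
    have mL: "m < p * (ainf-1) + 1" using im True ts'_0 by simp
    consider "m = 0" | "m = p * (ainf - 1)" | "0 < m" "m + 1 < p * (ainf-1) + 1" using mL by linarith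
    then show ?thesis
    proof cases
      case 1 then show ?thesis using lift_edge_leaving_infty[OF F s] e True by simp
    next
      case 2 then show ?thesis using lift_edge_entering_infty[OF F s] e True by simp
    next
      case 3
      have md: "(m+1) mod ts'!i = m + 1" using 3 True ts'_0 by simp
      have "(m-1) mod (ainf-1) \<le> ainf - 2" using path_index_bounds[OF 3(1) mL] by simp
      then consider "(m-1) mod (ainf-1) < ainf - 2" | "(m-1) mod (ainf-1) = ainf - 2" by linarith
      then show ?thesis
      proof cases
        case 1 then show ?thesis using lift_edge_path[OF F s 3] e True md by simp
      next
        case 2 then show ?thesis using lift_edge_turn[OF F s 3] e True md by simp
      qed
    qed
  qed
qed

lemma phi_le: "F \<in> FF \<Longrightarrow> x \<in> V \<Longrightarrow> phi F x \<le> 2 \<and> (p = 2 \<longrightarrow> phi F x \<le> 1)"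
proof -
  assume F: "F \<in> FF" and x: "x \<in> V"
  obtain i j where ij: "iso F x = (i,j)" by force
  have "(i,j) \<in> cycles_verts ts" using bij_iso[OF F] x ij by (metis bij_betwE)
  then have "i < length ts" by (simp add: mem_cycles_verts)
  then show ?thesis unfolding phi_def ij using weight_le_2 weight_le_1[of i j] by (cases "i = 0") (auto simp: weight_def)
qed

lemma factor_subset: "F \<in> FF \<Longrightarrow> F \<subseteq> complete_edges V"
  using iso_factor unfolding iso_cycles_via_def by blast

lemma edge_in_V: "F \<in> FF \<Longrightarrow> {x,y} \<in> F \<Longrightarrow> x \<in> V \<and> y \<in> V"
  using factor_subset complete_edges_subset_Pow by blast

lemma nbrs_neq_infty: "F \<in> FF \<Longrightarrow> nbr_first F \<noteq> infty \<and> nbr_last F \<noteq> infty"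
  unfolding nbr_first_def nbr_last_def using vert_neq_infty first_cycle_in_cycles_verts ainf_ge_3 by auto

lemma infty_edges: "F \<in> FF \<Longrightarrow> {infty, nbr_first F} \<in> F \<and> {infty, nbr_last F} \<in> F"
proof -
  assume F: "F \<in> FF"
  have "{vert F 0 0, vert F 0 ((0+1) mod ainf)} \<in> F" using vert_edge[OF F origin_in_cycles_verts] by simp
  moreover have "(0+1) mod ainf = 1" using ainf_ge_3 by simp
  moreover have "{vert F 0 (ainf-1), vert F 0 ((ainf - 1 + 1) mod ainf)} \<in> F" using vert_edge[OF F first_cycle_in_cycles_verts, of "ainf-1"] ainf_ge_3 by simp
  moreover have "(ainf - 1 + 1) mod ainf = 0" using ainf_ge_3 by simp
  ultimately show ?thesis using vert_origin[OF F] unfolding nbr_first_def nbr_last_def by (simp add: insert_commute)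
qed

lemma phi_nbr_le_1: "F \<in> FF \<Longrightarrow> x = nbr_first F \<or> x = nbr_last F \<Longrightarrow> phi F x \<le> 1"
  using phi_nbr_first phi_nbr_last by auto

lemma cross_edge_shift_unique:
  assumes F: "F \<in> FF" and s: "s < p" "s' < p" and C: "cross_edge F s e" "cross_edge F s' e"
  shows "s = s'"
proof -
  obtain x y K where X: "e = {(x, (K + s * phi F x) mod p), (y, (K + s * phi F y) mod p)}"
    "{x,y} \<in> F" "x \<noteq> y" "phi F x \<noteq> phi F y" using C(1) unfolding cross_edge_def by blast
  obtain x' y' K' where X': "e = {(x', (K' + s' * phi F x') mod p), (y', (K' + s' * phi F y') mod p)}"
    using C(2) unfolding cross_edge_def by blast
  have "(K + s * phi F x) mod p = (K' + s' * phi F x) mod p \<and> (K + s * phi F y) mod p = (K' + s' * phi F y) mod p"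
    using X(1) X' X(3) by (auto simp: doubleton_eq_iff)
  then have "int p dvd (int (K + s * phi F x) - int (K' + s' * phi F x))
      - (int (K + s * phi F y) - int (K' + s' * phi F y))"
    by (intro dvd_diff int_dvd_diff_if_mod_eq) simp_all
  also have "\<dots> = (int s - int s') * (int (phi F x) - int (phi F y))" by (simp add: algebra_simps)
  finally have d: "int p dvd (int s - int s') * (int (phi F x) - int (phi F y))" .
  have "x \<in> V" "y \<in> V" using edge_in_V[OF F X(2)] by auto
  have "coprime (int p) (int (phi F x) - int (phi F y))"
  proof (rule coprime_int_small)
    show "int (phi F x) - int (phi F y) = 1 \<or> int (phi F x) - int (phi F y) = - 1 \<or>
        ((int (phi F x) - int (phi F y) = 2 \<or> int (phi F x) - int (phi F y) = - 2) \<and> odd p)"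
      using phi_le[OF F \<open>x \<in> V\<close>] phi_le[OF F \<open>y \<in> V\<close>] X(4) p_cases by auto
  qed
  then show ?thesis using eq_if_dvd_diff_mult_coprime[OF d _ s] by simp
qed

lemma inf_edge_shift_unique:
  assumes F: "F \<in> FF" and s: "s < p" "s' < p" and I: "inf_edge F s e" "inf_edge F s' e"
  shows "s = s'"
proof -
  obtain x l where X: "e = {(infty,0),(x,l)}" "x = nbr_first F \<or> x = nbr_last F" "inf_label F x l s"
    using I(1) unfolding inf_edge_def by blast
  have "x \<noteq> infty" using X(2) nbrs_neq_infty[OF F] by auto
  then have I': "inf_label F x l s'"
    using I(2) X(1) unfolding inf_edge_def by (auto simp: doubleton_eq_iff)
  show ?thesis
  proof (cases "p = 2")
    case True then show ?thesis using X(3) I' unfolding inf_label_def by auto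
  next
    case False
    let ?H = "if x = nbr_first F then 0 else zigzag (p-1)"
    have "(s * (1 + phi F x) + ?H) mod p = (s' * (1 + phi F x) + ?H) mod p"
      using X(3) I' False unfolding inf_label_def by simp
    then have "int p dvd int (s * (1 + phi F x) + ?H) - int (s' * (1 + phi F x) + ?H)"
      by (rule int_dvd_diff_if_mod_eq)
    also have "\<dots> = (int s - int s') * (1 + int (phi F x))" by (simp add: algebra_simps)
    finally have d: "int p dvd (int s - int s') * (1 + int (phi F x))" .
    have "coprime (int p) (1 + int (phi F x))"
      using coprime_int_small[of "1 + int (phi F x)" p] phi_nbr_le_1[OF F X(2)] False p_cases
      by (cases "phi F x = 0") auto
    then show ?thesis using eq_if_dvd_diff_mult_coprime[OF d _ s] by simp
  qed
qed

lemma vertical_edge_shift_unique: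
  assumes F: "F \<in> FF" and s: "s < p" "s' < p" and W: "vertical_edge F s e" "vertical_edge F s' e"
  shows "s = s'"
proof -
  obtain x l1 l2 where X: "e = {(x,l1),(x,l2)}" "x = nbr_first F \<or> x = nbr_last F"
      "vertical_labels F x l1 l2 s" "l1 \<noteq> l2"
    using W(1) unfolding vertical_edge_def by blast
  obtain x' l1' l2' where X': "e = {(x',l1'),(x',l2')}" "vertical_labels F x' l1' l2' s'"
    using W(2) unfolding vertical_edge_def by blast
  have "x' = x" "l1' + l2' = l1 + l2" using X(1) X'(1) X(4) by (auto simp: doubleton_eq_iff)
  then have W': "vertical_labels F x l1 l2 s'" using X'(2) unfolding vertical_labels_def by metis
  show ?thesis
  proof (cases "p = 2")
    case True then show ?thesis using X(3) W' unfolding vertical_labels_def by auto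
  next
    case False
    then have op: "odd p" using p_cases by auto
    let ?H = "if x = nbr_first F then 0 else 1::nat"
    have "(2 * s * (1 + phi F x) + ?H) mod p = (2 * s' * (1 + phi F x) + ?H) mod p"
      using X(3) W' False unfolding vertical_labels_def by simp
    then have "int p dvd int (2 * s * (1 + phi F x) + ?H) - int (2 * s' * (1 + phi F x) + ?H)"
      by (rule int_dvd_diff_if_mod_eq)
    also have "\<dots> = (int s - int s') * (2 * (1 + int (phi F x)))" by (simp add: algebra_simps)
    finally have d: "int p dvd (int s - int s') * (2 * (1 + int (phi F x)))" .
    have "coprime (int p) 2" using coprime_int_small[of 2 p] op by simp
    moreover have "coprime (int p) (1 + int (phi F x))"
      using coprime_int_small[of "1 + int (phi F x)" p] phi_nbr_le_1[OF F X(2)] op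
      by (cases "phi F x = 0") auto
    ultimately have "coprime (int p) (2 * (1 + int (phi F x)))" by (simp only: coprime_mult_right_iff)
    then show ?thesis using eq_if_dvd_diff_mult_coprime[OF d _ s] by simp
  qed
qed

lemma lifted_factor_shift_unique:
  assumes F: "F \<in> FF" and s: "s < p" "s' < p" and e: "e \<in> lifted_factor F s" "e \<in> lifted_factor F s'"
  shows "s = s'"
proof -
  have "(infty,0) \<notin> e" if "cross_edge F t e \<or> vertical_edge F t e" for t
    using that nbrs_neq_infty[OF F] unfolding cross_edge_def vertical_edge_def by auto
  moreover have "(infty,0) \<in> e" if "inf_edge F t e" for t
    using that unfolding inf_edge_def by auto
  moreover have "\<not> (cross_edge F t e \<and> vertical_edge F t' e)" for t t'
    unfolding cross_edge_def vertical_edge_def by (auto simp: doubleton_eq_iff)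
  ultimately show ?thesis
    using lifted_edge_cases[OF F s(1) e(1)] lifted_edge_cases[OF F s(2) e(2)]
      cross_edge_shift_unique[OF F s] inf_edge_shift_unique[OF F s] vertical_edge_shift_unique[OF F s]
    by blast
qed

text \<open>A vertical edge at x projects onto the edge between x and \<infinity>.\<close>
definition base_edge :: "('v \<times> nat) set \<Rightarrow> 'v set" where
  "base_edge e = (if card (fst ` e) = 2 then fst ` e else insert infty (fst ` e))"

lemma base_edge_in_factor:
  assumes F: "F \<in> FF" and s: "s < p" and e: "e \<in> lifted_factor F s"
  shows "base_edge e \<in> F"
proof -
  have uwi: "nbr_first F \<noteq> infty" "nbr_last F \<noteq> infty" using nbrs_neq_infty[OF F] by auto
  have ie: "{infty, nbr_first F} \<in> F" "{infty, nbr_last F} \<in> F" using infty_edges[OF F] by auto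
  consider "cross_edge F s e" | "inf_edge F s e" | "vertical_edge F s e" using lifted_edge_cases[OF F s e] by blast
  then show ?thesis
  proof cases
    case 1
    then obtain x y A B where X: "e = {(x,A),(y,B)}" "{x,y} \<in> F" "x \<noteq> y"
      unfolding cross_edge_def by blast
    then have "fst ` e = {x,y}" by simp
    then show ?thesis unfolding base_edge_def using X by simp
  next
    case 2
    then obtain x l where X: "e = {(infty,0),(x,l)}" "x = nbr_first F \<or> x = nbr_last F"
      unfolding inf_edge_def by blast
    then have "x \<noteq> infty" using uwi by auto
    moreover have "fst ` e = {infty, x}" using X by simp
    ultimately show ?thesis unfolding base_edge_def using X ie by auto
  next
    case 3
    then obtain x l1 l2 where X: "e = {(x,l1),(x,l2)}" "x = nbr_first F \<or> x = nbr_last F"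
      unfolding vertical_edge_def by blast
    have "fst ` e = {x}" using X by simp
    then show ?thesis unfolding base_edge_def using X ie by auto
  qed
qed

lemma lifted_factors_disjoint:
  assumes F: "F \<in> FF" "F' \<in> FF" and s: "s < p" "s' < p" and ne: "(F,s) \<noteq> (F',s')"
  shows "lifted_factor F s \<inter> lifted_factor F' s' = {}"
proof (rule ccontr)
  assume "lifted_factor F s \<inter> lifted_factor F' s' \<noteq> {}"
  then obtain e where e: "e \<in> lifted_factor F s" "e \<in> lifted_factor F' s'" by blast
  have "base_edge e \<in> F" "base_edge e \<in> F'" using base_edge_in_factor F s e by auto
  then have "F = F'" using partition F unfolding edge_partition_def by blast
  then show False using lifted_factor_shift_unique[OF F(1) s] e ne by auto
qed

lemma card_factor: assumes F: "F \<in> FF" shows "card F = card V"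
proof -
  have inj: "inj_on (\<lambda>e. iso F ` e) F"
  proof -
    have "inj_on (iso F) V" using bij_iso[OF F] by (simp add: bij_betw_def)
    then have "inj_on (\<lambda>e. iso F ` e) (Pow V)" by (rule inj_on_image_Pow)
    moreover have "F \<subseteq> Pow V" using factor_subset[OF F] complete_edges_subset_Pow by blast
    ultimately show ?thesis using inj_on_subset by blast
  qed
  have "card F = card ((\<lambda>e. iso F ` e) ` F)" using card_image[OF inj] by simp
  also have "\<dots> = card (cycles_graph ts)" using iso_factor[OF F] unfolding iso_cycles_via_def by simp
  also have "\<dots> = sum_list ts" using card_cycles_graph ts_ge_3 by simp
  finally show ?thesis using card_V_eq_sum[OF F] by simp
qed

lemma finite_FF: "finite FF"
proof -
  have "FF \<subseteq> Pow (complete_edges V)" using partition unfolding edge_partition_def by auto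
  then show ?thesis using finite_complete_edges[OF finite_V] finite_subset by blast
qed

lemma card_V_eq_Suc_2_card_FF: "card V = 2 * card FF + 1"
proof -
  have "card (\<Union>F\<in>FF. F) = (\<Sum>F\<in>FF. card F)"
  proof (rule card_UN_disjoint[OF finite_FF])
    show "\<forall>F\<in>FF. finite F"
      using factor_subset finite_complete_edges[OF finite_V] finite_subset by blast
    show "\<forall>F\<in>FF. \<forall>G\<in>FF. F \<noteq> G \<longrightarrow> F \<inter> G = {}"
      using partition unfolding edge_partition_def by blast
  qed
  also have "\<dots> = card FF * card V" using card_factor by simp
  finally have "card FF * card V = card V * (card V - 1) div 2"
    using partition card_complete_edges[OF finite_V] unfolding edge_partition_def by simp
  moreover have "0 < card V" using finite_V infty_in_V card_gt_0_iff by blast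
  then obtain n where n: "card V = n + 1" by (metis Suc_eq_plus1 gr0_conv_Suc)
  ultimately have "card FF * (n + 1) = (n + 1) * n div 2" by simp
  then have "(n + 1) * (2 * card FF) = 2 * ((n + 1) * n div 2)" by (simp only: mult_ac)
  also have "\<dots> = (n + 1) * n" by simp
  finally show ?thesis using n by (simp only: mult_cancel1) simp
qed

definition lifted_factors :: "('v \<times> nat) set set set" where
  "lifted_factors = (\<lambda>(F,s). lifted_factor F s) ` (FF \<times> {..<p})"

lemma card_Union_lifted_factors: "card (\<Union>lifted_factors) = card FF * p * card V'"
proof -
  let ?L = "case_prod lifted_factor"
  have "card (\<Union>lifted_factors) = (\<Sum>i\<in>FF \<times> {..<p}. card (?L i))"
    unfolding lifted_factors_def
  proof (rule card_UN_disjoint)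
    show "finite (FF \<times> {..<p})" using finite_FF by simp
    show "\<forall>i\<in>FF \<times> {..<p}. finite (?L i)"
      unfolding lifted_factor_def using finite_cycle_edges by auto
    show "\<forall>i\<in>FF \<times> {..<p}. \<forall>j\<in>FF \<times> {..<p}. i \<noteq> j \<longrightarrow> ?L i \<inter> ?L j = {}"
      using lifted_factors_disjoint by auto
  qed
  also have "\<dots> = (\<Sum>_\<in>FF \<times> {..<p}. card V')" using card_lifted_factor by (intro sum.cong) auto
  finally show ?thesis by (simp add: card_cartesian_product)
qed

lemma Union_lifted_factors: "\<Union>lifted_factors = complete_edges V'"
proof (rule card_subset_eq)
  show "finite (complete_edges V')" using finite_complete_edges[OF finite_V'] .
  show "\<Union>lifted_factors \<subseteq> complete_edges V'"
    unfolding lifted_factors_def using lifted_factor_subset by auto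
  have "card V' = 1 + p * (2 * card FF)" using card_V' card_V_eq_Suc_2_card_FF by simp
  then show "card (\<Union>lifted_factors) = card (complete_edges V')"
    unfolding card_Union_lifted_factors card_complete_edges[OF finite_V'] by simp
qed

lemma OP_solution_lifted_factors: "OP_solution V' lifted_factors ts'"
  unfolding OP_solution_def edge_partition_def
proof (intro conjI ballI impI)
  show "\<And>t. t \<in> set ts' \<Longrightarrow> 3 \<le> t" using ts'_ge_3 by blast
  show "\<Union>lifted_factors = complete_edges V'" by (rule Union_lifted_factors)
  show "\<And>F1 F2. F1 \<in> lifted_factors \<Longrightarrow> F2 \<in> lifted_factors \<Longrightarrow> F1 \<noteq> F2 \<Longrightarrow> F1 \<inter> F2 = {}"
    unfolding lifted_factors_def using lifted_factors_disjoint by fastforce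
  show "\<And>F. F \<in> lifted_factors \<Longrightarrow> iso_cycles V' F ts'"
    unfolding lifted_factors_def using iso_cycles_lifted_factor by auto
qed

end

section \<open>Blowing up a 1-rotational solution\<close>

lemma OP_solvable_blow_up:
  fixes V :: "'v set" and infty :: 'v
  assumes sol: "OP_solution V FF (a # as)" and "finite V" and "infty \<in> V" and "FF \<noteq> {}"
    and infty_first: "\<forall>F\<in>FF. \<exists>f. iso_cycles_via V F (a # as) f \<and> fst (f infty) = 0"
    and "(odd p \<and> 3 \<le> p) \<or> (p = 2 \<and> (\<forall>t\<in>set as. even t))"
  shows "OP_solvable ((p * (a - 1) + 1) # concat (map (replicate p) as))"
proof -
  have ts_ge_3: "\<forall>t\<in>set (a # as). 3 \<le> t" and "edge_partition V FF"
    using sol unfolding OP_solution_def by blast+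
  have "\<exists>f. iso_cycles_via V F (a # as) f \<and> f infty = (0,0)" if "F \<in> FF" for F
  proof -
    from bspec[OF infty_first that] obtain f
      where f: "iso_cycles_via V F (a # as) f" "fst (f infty) = 0" by blast
    then have "f infty = (0, snd (f infty))" by (metis prod.collapse)
    then show ?thesis using iso_cycles_via_rotate[OF f(1) \<open>infty \<in> V\<close>] by simp
  qed
  then have "\<forall>F\<in>FF. \<exists>f. iso_cycles_via V F (a # as) f \<and> f infty = (0,0)" by blast
  then obtain iso where "\<forall>F\<in>FF. iso_cycles_via V F (a # as) (iso F) \<and> iso F infty = (0,0)"
    by (subst (asm) bchoice_iff) blast
  then interpret cycle_lift V infty FF "a # as" p iso
    by unfold_locales (use assms ts_ge_3 \<open>edge_partition V FF\<close> in auto)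
  obtain F where "F \<in> FF" using \<open>FF \<noteq> {}\<close> by blast
  show ?thesis
    using OP_solvable_if_solution[OF OP_solution_lifted_factors finite_V' card_V'_eq_sum[OF \<open>F \<in> FF\<close>]]
    unfolding ts'_def by simp
qed

lemma OP_solution_of_one_rotational:
  "one_rotational_solution G FF a as \<Longrightarrow> OP_solution (ext_carrier G) FF (a # as)"
  unfolding one_rotational_solution_def OP_solution_def iso_cycles_def by blast

lemma one_rotational_factors_nonempty:
  assumes "group G" and "one_rotational_solution G FF a as"
  shows "FF \<noteq> {}"
proof
  assume "FF = {}"
  then have "complete_edges (ext_carrier G) = {}"
    using assms(2) unfolding one_rotational_solution_def edge_partition_def by auto
  moreover have "{None, Some \<one>\<^bsub>G\<^esub>} \<in> complete_edges (ext_carrier G)"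
    using group.is_monoid[OF assms(1)] unfolding complete_edges_def ext_carrier_def by auto
  ultimately show False by simp
qed

theorem theorem4p2:
  fixes G :: "('a, 'b) monoid_scheme" and FF :: "'a option set set set"
    and ainf :: nat and as :: "nat list"
  assumes "group G" and "finite (carrier G)"
    and "one_rotational_solution G FF ainf as"
  shows "((\<forall>a\<in>set as. even a) \<longrightarrow>
            OP_solvable ((2 * ainf - 1) # concat (map (replicate 2) as)))
       \<and> (\<forall>p::nat. prime p \<and> odd p \<longrightarrow>
            OP_solvable ((p * (ainf - 1) + 1) # concat (map (replicate p) as)))"
proof -
  have lift: "OP_solvable ((p * (ainf - 1) + 1) # concat (map (replicate p) as))"
    if "(odd p \<and> 3 \<le> p) \<or> (p = 2 \<and> (\<forall>t\<in>set as. even t))" for p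
  proof (rule OP_solvable_blow_up[OF OP_solution_of_one_rotational[OF assms(3)] _ _ _ _ that])
    show "finite (ext_carrier G)" "None \<in> ext_carrier G"
      using assms(2) unfolding ext_carrier_def by auto
    show "FF \<noteq> {}" using one_rotational_factors_nonempty[OF assms(1,3)] .
    show "\<forall>F\<in>FF. \<exists>f. iso_cycles_via (ext_carrier G) F (ainf # as) f \<and> fst (f None) = 0"
      using assms(3) unfolding one_rotational_solution_def by blast
  qed
  have "3 \<le> ainf" using assms(3) unfolding one_rotational_solution_def by auto
  then have "2 * ainf - 1 = 2 * (ainf - 1) + 1" by simp
  moreover have "3 \<le> p" if "prime p" "odd p" for p :: nat
    using prime_ge_2_nat[OF that(1)] that(2) by (cases "p = 2") auto
  ultimately show ?thesis using lift by auto
qed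

end
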